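(* Let $1\le k<n$, $n>2$, $(R,r)$ a hypothesis and $(\kappa,M,p)$ satisfy Assumption (A). Let $(y,X)\in\mathbb{R}^n\times\mathfrak{X}_0$ and $t\ge k$ be such that: (A1) $\hat V_X(y)$ has exactly $t+1$ nonzero columns, with indices $1=j_1<j_2<\dots<j_{t+1}\le n$; (A2) $j_{i+1}-j_i\ge p+1$ for $i=1,\dots,t$, and $n-j_{t+1}\ge p-1$; (A3) if $t=k$ then $\operatorname{rank}\hat V_X(y)=k$; otherwise $\operatorname{span}\{[\hat V_X(y)]_{\cdot j_i}:i=1,\dots,t\}=\operatorname{span}\{[\hat V_X(y)]_{\cdot j_i}:i=2,\dots,t+1\}=\mathbb{R}^k$. Then: 1. $\hat A^{(p)}_X(y)$ is defined and equals $0$. 2. $y\notin N^*(\hat\Omega_{\kappa,M,p,X})$ under each of: (CKV) $M\in\mathbb{M}_{KV}$; (CAM) $M\in\mathbb{M}_{AM}$ and every row of the matrix obtained from $\hat Z_X(y)$ by deleting its last column is nonzero (this holds in particular if $n-j_{t+1}>p-1$); (CNW) $M\in\mathbb{M}_{NW}$ and either all coordinates of $\omega'\hat Z_X(y)$ are nonnegative or all are nonpositive ($\omega$ the weights vector of $M$). 3. For every $Q\in\mathbb{R}^{k\times k}$ with $\operatorname{rank}Q=k$, $(y,XQ)\in\mathbb{R}^n\times\mathfrak{X}_0$ satisfies (A1), (A2), (A3). 4. If $k\ge2$ and either $[\hat V_X(y)]_{1j_i}>0$ for all $i=2,\dots,t+1$ or $[\hat V_X(y)]_{1j_i}<0$ for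 all $i=2,\dots,t+1$, then there is a regular $Q\in\mathbb{R}^{k\times k}$ such that $X$ and $XQ$ have the same first column and $y\notin N^*(\hat\Omega_{\kappa,M,p,XQ})$.
   Context: Let $n>2$, $1\le k<n$, $\mathfrak{X}_0=\{X\in\mathbb{R}^{n\times k}:\operatorname{rank}X=k\}$. For $X\in\mathfrak{X}_0$: $\hat\beta_X(y)=(X'X)^{-1}X'y$, $\hat u_X(y)=y-X\hat\beta_X(y)$. Hypothesis $(R,r)$: $R\in\mathbb{R}^{q\times k}$ of rank $q\ge1$, $r\in\mathbb{R}^q$. $[A]_{ij}$, $[A]_{\cdot j}$ denote entries and columns. Estimator $\hat\Omega_{\kappa,M,p,X}$ at $y$: $\hat V_X(y)=X'\operatorname{diag}(\hat u_X(y))\in\mathbb{R}^{k\times n}$ with columns $\hat V_{\cdot j}$; $\hat V_p=(\hat V_{\cdot(p+1)},\dots,\hat V_{\cdot n})$; $\hat V_1\in\mathbb{R}^{kp\times(n-p)}$ with $j$-th column $(\hat V_{\cdot(j+p-1)}',\dots,\hat V_{\cdot j}')'$. If $\hat V_1\hat V_1'$ invertible: $\hat A^{(p)}_X(y)=(\hat A_1,\dots,\hat A_p)=\hat V_p\hat V_1'(\hat V_1\hat V_1')^{-1}$, $\hat Z_X(y)=\hat V_p-\hat A^{(p)}\hat V_1\in\mathbb{R}^{k\times(n-p)}$; $\check\Gamma_i=(n-p)^{-1}\sum_{j=i+1}^{n-p}\hat Z_{\cdot j}\hat Z_{\cdot(j-i)}'$, $\check\Gamma_{-i}=\check\Gamma_i'$;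 $\check\Psi=\sum_{|i|\le n-p-1}\kappa(i/M(y))\check\Gamma_i$ (if $M(y)=0$: weight $1$ at $i=0$, else $0$). If $I_k-\sum_l\hat A_l$ invertible with inverse $F$: $\hat\Omega_{\kappa,M,p,X}(y)=nR(X'X)^{-1}F\check\Psi F'(X'X)^{-1}R'$; undefined otherwise or if $M(y)$ undefined. $N^*(\hat\Omega)$: set of $y$ where $\hat\Omega(y)$ is undefined or singular. Bandwidths (undefined if $\hat Z(y)$ undefined or a denominator vanishes; tuning constants independent of $y$ and $X$; weights vector $\omega\in\mathbb{R}^k\setminus\{0\}$, entries $\ge0$). $\mathbb{M}_{AM}$: $\hat\rho_i=\sum_{j=2}^{n-p}\hat Z_{ij}\hat Z_{i(j-1)}/\sum_{j=1}^{n-p-1}\hat Z_{ij}^2$, $\hat\sigma_i^2=(n-p-1)^{-1}\sum_{j=2}^{n-p}(\hat Z_{ij}-\hat\rho_i\hat Z_{i(j-1)})^2$, $\hat\alpha_1=\sum_i\omega_i\frac{4\hat\rho_i^2\hat\sigma_i^4}{(1-\hat\rho_i)^6(1+\hat\rho_i)^2}/\sum_i\omega_i\frac{\hat\sigma_i^4}{(1-\hat\rho_i)^4}$, $\hat\alpha_2=\sum_i\omega_i\frac{4\hat\rho_i^2\hat\sigma_i^4}{(1-\hat\rho_i)^8}/\sum_i\omega_i\frac{\hat\sigma_i^4}{(1-\hat\rho_i)^4}$, $M=c_1(\hat\alpha_jn)^{c_2}$, $c_1,c_2>0$, $j\in\{1,2\}$. $\mathbb{M}_{NW}$: $w(i)\ge0$,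 $w(0)=1$, $\bar\sigma_i=\omega'\check\Gamma_{|i|}\omega$, $M=\bar c_2([\sum_i|i|^{\bar c_1}w(i)\bar\sigma_i/\sum_iw(i)\bar\sigma_i]^2n)^{\bar c_3}$, $\bar c_1\in\mathbb{N}$, $\bar c_2,\bar c_3>0$. $\mathbb{M}_{KV}$: constants $M>0$. Assumption (A): (i) $\kappa$ even, continuous, $\kappa(0)=1$, $\kappa(x)\to0$ as $x\to\infty$, $(\kappa((i-j)/s))_{i,j=1}^J$ positive definite for all $s>0$, $J\in\mathbb{N}$; (ii) $M\in\mathbb{M}_{AM}\cup\mathbb{M}_{NW}\cup\mathbb{M}_{KV}$; (iii) $p\in\mathbb{Z}$, $1\le p\le n/(k+1)$. *)

theory Defs
  imports "HOL-Analysis.Analysis" "Jordan_Normal_Form.DL_Rank"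
begin

text \<open>Matrices are Jordan_Normal_Form matrices (real mat), vectors are real vec.
  All indices are 0-based: the paper's column j (1-based) is column j-1 here.\<close>

abbreviation mrank :: "nat \<Rightarrow> real mat \<Rightarrow> nat" where
  "mrank m A \<equiv> vec_space.rank m A"

abbreviation vspan :: "nat \<Rightarrow> real vec set \<Rightarrow> real vec set" where
  "vspan m S \<equiv> LinearCombinations.module.span class_ring (module_vec TYPE(real) m) S"

definition minv :: "real mat \<Rightarrow> real mat" where
  "minv A = (SOME B. inverts_mat A B \<and> inverts_mat B A)"

definition design0 :: "nat \<Rightarrow> nat \<Rightarrow> real mat set" where
  "design0 n k = {X. X \<in> carrier_mat n k \<and> mrank n X = k}"

definition uhat :: "real mat \<Rightarrow> real vec \<Rightarrow> real vec" where
  "uhat X y = y - X *\<^sub>v (minv (transpose_mat X * X) *\<^sub>v (transpose_mat X *\<^sub>v y))"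

definition Vhat :: "real mat \<Rightarrow> real vec \<Rightarrow> real mat" where
  "Vhat X y = transpose_mat X * mat_diag (dim_vec y) (\<lambda>j. uhat X y $ j)"

definition Vp_mat :: "nat \<Rightarrow> real mat \<Rightarrow> real mat" where
  "Vp_mat p V = mat (dim_row V) (dim_col V - p) (\<lambda>(r, j). V $$ (r, j + p))"

text \<open>\<open>V_1\<close>: (kp) x (n-p); its (0-based) column j is the stack of the columns
  j+p-1, j+p-2, ..., j of V (paper: \<open>(V_{j+p-1}',...,V_j')'\<close> for 1-based j).\<close>
definition V1_mat :: "nat \<Rightarrow> real mat \<Rightarrow> real mat" where
  "V1_mat p V = mat (dim_row V * p) (dim_col V - p)
     (\<lambda>(i, j). V $$ (i mod dim_row V, j + p - 1 - i div dim_row V))"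

definition Ahat :: "nat \<Rightarrow> real mat \<Rightarrow> real vec \<Rightarrow> real mat option" where
  "Ahat p X y = (let V = Vhat X y; V1 = V1_mat p V in
     if invertible_mat (V1 * transpose_mat V1)
     then Some (Vp_mat p V * transpose_mat V1 * minv (V1 * transpose_mat V1))
     else None)"

definition Zhat :: "nat \<Rightarrow> real mat \<Rightarrow> real vec \<Rightarrow> real mat option" where
  "Zhat p X y = map_option (\<lambda>A. Vp_mat p (Vhat X y) - A * V1_mat p (Vhat X y)) (Ahat p X y)"

definition Gam :: "real mat \<Rightarrow> int \<Rightarrow> real mat" where
  "Gam Z i = mat (dim_row Z) (dim_row Z) (\<lambda>(a, b).
     if 0 \<le> i then
       (1 / real (dim_col Z)) * (\<Sum>j\<in>{nat i..<dim_col Z}. Z $$ (a, j) * Z $$ (b, j - nat i))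
     else
       (1 / real (dim_col Z)) * (\<Sum>j\<in>{nat (- i)..<dim_col Z}. Z $$ (b, j) * Z $$ (a, j - nat (- i))))"

definition kw :: "(real \<Rightarrow> real) \<Rightarrow> real \<Rightarrow> int \<Rightarrow> real" where
  "kw \<kappa> M i = (if M = 0 then (if i = 0 then 1 else 0) else \<kappa> (real_of_int i / M))"

definition Psi :: "(real \<Rightarrow> real) \<Rightarrow> real \<Rightarrow> real mat \<Rightarrow> real mat" where
  "Psi \<kappa> M Z = mat (dim_row Z) (dim_row Z) (\<lambda>(a, b).
     \<Sum>i\<in>{- (int (dim_col Z) - 1) .. int (dim_col Z) - 1}. kw \<kappa> M i * Gam Z i $$ (a, b))"

definition sumA :: "nat \<Rightarrow> real mat \<Rightarrow> real mat" where
  "sumA p A = mat (dim_row A) (dim_row A) (\<lambda>(a, b). \<Sum>l<p. A $$ (a, l * dim_row A + b))"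

text \<open>KV: constant M. AM: weights \<omega>, constants c1 c2, selector j \<in> {1,2}.
  NW: weight function w, weights \<omega>, constants \<open>c1\<close> (natural), \<open>c2\<close>, \<open>c3\<close>.\<close>
datatype bandwidth =
    BW_KV real
  | BW_AM "real vec" real real nat
  | BW_NW "int \<Rightarrow> real" "real vec" nat real real

definition weights_ok :: "nat \<Rightarrow> real vec \<Rightarrow> bool" where
  "weights_ok k \<omega> \<longleftrightarrow> \<omega> \<in> carrier_vec k \<and> \<omega> \<noteq> 0\<^sub>v k \<and> (\<forall>i<k. 0 \<le> \<omega> $ i)"

fun bw_ok :: "nat \<Rightarrow> bandwidth \<Rightarrow> bool" where
  "bw_ok k (BW_KV c) \<longleftrightarrow> 0 < c"
| "bw_ok k (BW_AM \<omega> c1 c2 j) \<longleftrightarrow> weights_ok k \<omega> \<and> 0 < c1 \<and> 0 < c2 \<and> j \<in> {1, 2}"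
| "bw_ok k (BW_NW w \<omega> c1 c2 c3) \<longleftrightarrow> (\<forall>i. 0 \<le> w i) \<and> w 0 = 1 \<and> weights_ok k \<omega> \<and> 0 < c2 \<and> 0 < c3"

definition rho_den :: "real mat \<Rightarrow> nat \<Rightarrow> real" where
  "rho_den Z i = (\<Sum>j\<in>{0..<dim_col Z - 1}. (Z $$ (i, j))\<^sup>2)"

definition rho :: "real mat \<Rightarrow> nat \<Rightarrow> real" where
  "rho Z i = (\<Sum>j\<in>{1..<dim_col Z}. Z $$ (i, j) * Z $$ (i, j - 1)) / rho_den Z i"

definition sig2 :: "real mat \<Rightarrow> nat \<Rightarrow> real" where
  "sig2 Z i = (1 / (real (dim_col Z) - 1)) *
     (\<Sum>j\<in>{1..<dim_col Z}. (Z $$ (i, j) - rho Z i * Z $$ (i, j - 1))\<^sup>2)"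

text \<open>Value of the bandwidth at a given \<open>Z_X(y)\<close> (sample size n); None = undefined.\<close>
fun bw_val :: "bandwidth \<Rightarrow> nat \<Rightarrow> real mat \<Rightarrow> real option" where
  "bw_val (BW_KV c) n Z = Some c"
| "bw_val (BW_AM \<omega> c1 c2 jsel) n Z =
    (let k = dim_row Z;
         den = (\<Sum>i<k. \<omega> $ i * (sig2 Z i)\<^sup>2 / (1 - rho Z i) ^ 4);
         num1 = (\<Sum>i<k. \<omega> $ i * (4 * (rho Z i)\<^sup>2 * (sig2 Z i)\<^sup>2 / ((1 - rho Z i) ^ 6 * (1 + rho Z i) ^ 2)));
         num2 = (\<Sum>i<k. \<omega> $ i * (4 * (rho Z i)\<^sup>2 * (sig2 Z i)\<^sup>2 / (1 - rho Z i) ^ 8));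
         \<alpha> = (if jsel = 1 then num1 / den else num2 / den)
     in if (\<forall>i<k. rho_den Z i \<noteq> 0 \<and> rho Z i \<noteq> 1 \<and> (jsel = 1 \<longrightarrow> rho Z i \<noteq> -1)) \<and> den \<noteq> 0
        then Some (c1 * (\<alpha> * real n) powr c2) else None)"
| "bw_val (BW_NW w \<omega> c1 c2 c3) n Z =
    (let m = int (dim_col Z);
         sb = (\<lambda>i. \<omega> \<bullet> (Gam Z \<bar>i\<bar> *\<^sub>v \<omega>));
         num = (\<Sum>i\<in>{- (m - 1) .. m - 1}. real_of_int (\<bar>i\<bar> ^ c1) * w i * sb i);
         den = (\<Sum>i\<in>{- (m - 1) .. m - 1}. w i * sb i)
     in if den \<noteq> 0 then Some (c2 * ((num / den)\<^sup>2 * real n) powr c3) else None)"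

definition Omega_hat :: "(real \<Rightarrow> real) \<Rightarrow> bandwidth \<Rightarrow> nat \<Rightarrow> real mat \<Rightarrow> real mat \<Rightarrow> real vec
    \<Rightarrow> real mat option" where
  "Omega_hat \<kappa> b p R X y =
    (case Ahat p X y of None \<Rightarrow> None | Some A \<Rightarrow>
      (let n = dim_vec y; k = dim_col X; V = Vhat X y;
           Z = Vp_mat p V - A * V1_mat p V;
           S = 1\<^sub>m k - sumA p A
       in case bw_val b n Z of None \<Rightarrow> None | Some M \<Rightarrow>
          (if invertible_mat S then
             (let F = minv S; G = minv (transpose_mat X * X) in
              Some (real n \<cdot>\<^sub>m (R * G * F * Psi \<kappa> M Z * transpose_mat F * G * transpose_mat R)))
           else None)))"

definition Nstar :: "(real \<Rightarrow> real) \<Rightarrow> bandwidth \<Rightarrow> nat \<Rightarrow> real mat \<Rightarrow> real mat \<Rightarrow> real vec set" where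
  "Nstar \<kappa> b p R X = {y \<in> carrier_vec (dim_row X).
     Omega_hat \<kappa> b p R X y = None \<or> (\<exists>Om. Omega_hat \<kappa> b p R X y = Some Om \<and> \<not> invertible_mat Om)}"

definition kernel_ok :: "(real \<Rightarrow> real) \<Rightarrow> bool" where
  "kernel_ok \<kappa> \<longleftrightarrow> (\<forall>x. \<kappa> (- x) = \<kappa> x) \<and> continuous_on UNIV \<kappa> \<and> \<kappa> 0 = 1 \<and>
     (\<kappa> \<longlongrightarrow> 0) at_top \<and>
     (\<forall>s>0. \<forall>J::nat. \<forall>x::nat \<Rightarrow> real. (\<exists>i<J. x i \<noteq> 0) \<longrightarrow>
        0 < (\<Sum>i<J. \<Sum>j<J. x i * x j * \<kappa> ((real i - real j) / s)))"

definition assumptionA :: "nat \<Rightarrow> nat \<Rightarrow> (real \<Rightarrow> real) \<Rightarrow> bandwidth \<Rightarrow> nat \<Rightarrow> bool" where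
  "assumptionA n k \<kappa> b p \<longleftrightarrow> kernel_ok \<kappa> \<and> bw_ok k b \<and> 1 \<le> p \<and> real p \<le> real n / real (k + 1)"

text \<open>js i (i = 0..t) is the 0-based index of the paper's \<open>j_{i+1}\<close>.\<close>
definition condA :: "nat \<Rightarrow> real mat \<Rightarrow> real vec \<Rightarrow> nat \<Rightarrow> (nat \<Rightarrow> nat) \<Rightarrow> bool" where
  "condA p X y t js \<longleftrightarrow>
    (let V = Vhat X y; n = dim_vec y; k = dim_col X in
      \<comment> \<open>(A1)\<close>
      strict_mono_on {..t} js \<and> js 0 = 0 \<and> js t < n \<and>
      {j. j < n \<and> col V j \<noteq> 0\<^sub>v k} = js ` {..t} \<and>
      \<comment> \<open>(A2)\<close>
      (\<forall>i<t. p + 1 \<le> js (Suc i) - js i) \<and> int p - 1 \<le> int n - int (js t + 1) \<and>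
      \<comment> \<open>(A3)\<close>
      (if t = k then mrank k V = k
       else vspan k ((\<lambda>i. col V (js i)) ` {..<t}) = carrier_vec k \<and>
            vspan k ((\<lambda>i. col V (js i)) ` {1..t}) = carrier_vec k))"

end

theory Submission
  imports Defs
begin

text \<open>The columns of \<open>V = V_X(y)\<close> vanish outside \<open>j_1 < \<dots> < j_{t+1}\<close>, which are at least
  \<open>p + 1\<close> apart. Hence every entry of \<open>V_p V_1'\<close> pairs two entries of \<open>V\<close> whose columns are
  \<open>1, \<dots>, p\<close> apart, so \<open>V_p V_1' = 0\<close>; and \<open>V_1 V_1'\<close> is invertible, since each \<open>k\<close>-block of a
  vector in the kernel of \<open>V_1'\<close> is orthogonal to the columns \<open>j_1, \<dots>, j_t\<close> or to
  \<open>j_2, \<dots>, j_{t+1}\<close>, and both families span \<open>\<real>\<^sup>k\<close> by (A3) (for \<open>t = k\<close> because the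
  columns of \<open>V\<close> sum to \<open>X'u = 0\<close>). Thus \<open>A = 0\<close>, \<open>Z = V_p\<close> and
  \<open>\<Omega> = n R (X'X)\<^sup>-\<^sup>1 \<Psi> (X'X)\<^sup>-\<^sup>1 R'\<close>, which is invertible once the bandwidth is defined,
  because the kernel condition makes \<open>\<Psi>\<close> positive definite. The AM bandwidth is defined because
  \<open>\<rho>_i = 0\<close> (no row of \<open>V_p\<close> has two adjacent nonzero entries), the NW bandwidth because the sign
  condition makes all autocovariances of \<open>\<omega>'Z\<close> nonnegative. Passing from \<open>X\<close> to \<open>XQ\<close> replaces
  \<open>V\<close> by \<open>Q'V\<close>, which preserves (A1)--(A3); for part 4, \<open>Q\<close> is a shear fixing the first column
  of \<open>X\<close> that adds a large multiple of the first row of \<open>V\<close> to the other rows.\<close>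

no_notation inner (infix \<open>\<bullet>\<close> 70)

lemma mult_mat_vec_zero[simp]:
  fixes A :: "'a :: semiring_0 mat"
  assumes "A \<in> carrier_mat nr n"
  shows "A *\<^sub>v 0\<^sub>v n = 0\<^sub>v nr"
  by (rule eq_vecI) (use assms in auto)

lemma minv_inverse:
  fixes A :: "real mat"
  assumes A: "A \<in> carrier_mat n n" and inv: "invertible_mat A"
  shows "minv A \<in> carrier_mat n n" and "A * minv A = 1\<^sub>m n" and "minv A * A = 1\<^sub>m n"
proof -
  have "\<exists>B. inverts_mat A B \<and> inverts_mat B A" using inv unfolding invertible_mat_def by blast
  hence h: "inverts_mat A (minv A) \<and> inverts_mat (minv A) A" unfolding minv_def by (rule someI_ex)
  show AB: "A * minv A = 1\<^sub>m n" using h A unfolding inverts_mat_def by auto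
  have BA: "minv A * A = 1\<^sub>m (dim_row (minv A))" using h unfolding inverts_mat_def by auto
  have "dim_col (minv A) = n" using arg_cong[OF AB, of dim_col] by simp
  moreover have "dim_row (minv A) = n" using arg_cong[OF BA, of dim_col] A by simp
  ultimately show "minv A \<in> carrier_mat n n" and "minv A * A = 1\<^sub>m n" using BA by auto
qed

lemma invertible_matI:
  fixes A B :: "real mat"
  assumes "A \<in> carrier_mat n n" and "B \<in> carrier_mat n n"
    and "A * B = 1\<^sub>m n" and "B * A = 1\<^sub>m n"
  shows "invertible_mat A"
  using assms unfolding invertible_mat_def inverts_mat_def by auto

lemma minv_eqI:
  fixes A B :: "real mat"
  assumes A: "A \<in> carrier_mat n n" and B: "B \<in> carrier_mat n n"
    and AB: "A * B = 1\<^sub>m n" and BA: "B * A = 1\<^sub>m n"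
  shows "minv A = B"
proof -
  note C = minv_inverse[OF A invertible_matI[OF A B AB BA]]
  have "minv A = minv A * (A * B)" using AB C(1) by simp
  also have "\<dots> = (minv A * A) * B" using C(1) A B by simp
  also have "\<dots> = B" using C(3) B by simp
  finally show ?thesis .
qed

lemma invertible_mat_minv:
  fixes A :: "real mat"
  assumes A: "A \<in> carrier_mat n n" and inv: "invertible_mat A"
  shows "invertible_mat (minv A)"
  using invertible_matI[OF minv_inverse(1)[OF A inv] A] minv_inverse[OF A inv] by blast

lemma invertible_mat_transpose:
  fixes A :: "real mat"
  assumes A: "A \<in> carrier_mat n n" and inv: "invertible_mat A"
  shows "invertible_mat (transpose_mat A)"
proof (rule invertible_matI)
  note C = minv_inverse[OF A inv]
  show "transpose_mat A \<in> carrier_mat n n" and "transpose_mat (minv A) \<in> carrier_mat n n"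
    using A C(1) by auto
  show "transpose_mat A * transpose_mat (minv A) = 1\<^sub>m n"
    using transpose_mult[OF C(1) A] C(3) by simp
  show "transpose_mat (minv A) * transpose_mat A = 1\<^sub>m n"
    using transpose_mult[OF A C(1)] C(2) by simp
qed

lemma invertible_mat_if_det:
  fixes A :: "real mat"
  assumes A: "A \<in> carrier_mat n n" and det: "det A \<noteq> 0"
  shows "invertible_mat A"
proof -
  from det_non_zero_imp_unit[OF A det, of "()"]
  obtain B where "B \<in> carrier_mat n n" "B * A = 1\<^sub>m n" "A * B = 1\<^sub>m n"
    unfolding Units_def ring_mat_def by auto
  thus ?thesis using invertible_matI[OF A] by blast
qed

lemma invertible_mat_if_inj:
  fixes A :: "real mat"
  assumes A: "A \<in> carrier_mat n n" and inj: "\<forall>v\<in>carrier_vec n. A *\<^sub>v v = 0\<^sub>v n \<longrightarrow> v = 0\<^sub>v n"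
  shows "invertible_mat A"
  using invertible_mat_if_det[OF A] det_0_iff_vec_prod_zero_field[OF A] inj by blast

lemma invertible_mat_inj:
  fixes A :: "real mat"
  assumes A: "A \<in> carrier_mat n n" and inv: "invertible_mat A" and v: "v \<in> carrier_vec n"
    and Av: "A *\<^sub>v v = 0\<^sub>v n"
  shows "v = 0\<^sub>v n"
proof -
  note C = minv_inverse[OF A inv]
  have "v = (minv A * A) *\<^sub>v v" using C(3) v by simp
  also have "\<dots> = minv A *\<^sub>v (A *\<^sub>v v)" using C(1) A v by simp
  also have "\<dots> = 0\<^sub>v n" using Av C(1) by simp
  finally show ?thesis .
qed

lemma scalar_prod_self_eq_0_iff:
  fixes v :: "real vec"
  assumes v: "v \<in> carrier_vec n"
  shows "v \<bullet> v = 0 \<longleftrightarrow> v = 0\<^sub>v n"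
proof -
  have "conjugate v = v" by (rule eq_vecI) auto
  thus ?thesis using conjugate_square_eq_0_vec[OF v] by simp
qed

lemma gram_mult_vec_eq_0D:
  fixes A :: "real mat"
  assumes A: "A \<in> carrier_mat nr nc" and x: "x \<in> carrier_vec nr"
    and z: "(A * transpose_mat A) *\<^sub>v x = 0\<^sub>v nr"
  shows "transpose_mat A *\<^sub>v x = 0\<^sub>v nc"
proof -
  let ?w = "transpose_mat A *\<^sub>v x"
  have w: "?w \<in> carrier_vec nc" using A x by auto
  have "?w \<bullet> ?w = x \<bullet> (A *\<^sub>v ?w)" by (rule transpose_vec_mult_scalar[OF A w x])
  also have "A *\<^sub>v ?w = 0\<^sub>v nr" using z A x by auto
  finally show ?thesis using x scalar_prod_self_eq_0_iff[OF w] by simp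
qed

lemma mult_unit_vec_eq_col:
  fixes X :: "real mat"
  assumes "X \<in> carrier_mat n k" and "i < k"
  shows "X *\<^sub>v unit_vec k i = col X i"
  by (rule eq_vecI) (use assms in auto)

lemma smult_mult_mat_vec:
  fixes A :: "real mat"
  assumes "dim_vec v = dim_col A"
  shows "(c \<cdot>\<^sub>m A) *\<^sub>v v = c \<cdot>\<^sub>v (A *\<^sub>v v)"
  by (rule eq_vecI) (use assms in \<open>auto simp: scalar_prod_def sum_distrib_left ac_simps intro!: sum.cong\<close>)

lemma smult_vec_eq_0D:
  fixes u :: "real vec"
  assumes c: "c \<noteq> 0" and z: "c \<cdot>\<^sub>v u = 0\<^sub>v n"
  shows "u = 0\<^sub>v n"
proof -
  have dim: "dim_vec u = n" using arg_cong[OF z, of dim_vec] by simp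
  show ?thesis
  proof (rule eq_vecI)
    fix i assume "i < dim_vec (0\<^sub>v n)"
    hence "c * u $ i = 0" using arg_cong[OF z, of "\<lambda>w. vec_index w i"] dim by simp
    thus "u $ i = 0\<^sub>v n $ i" using c \<open>i < _\<close> by simp
  qed (use dim in simp)
qed

lemma quadratic_form_eq:
  fixes A :: "real mat"
  assumes "A \<in> carrier_mat k k" and "x \<in> carrier_vec k"
  shows "x \<bullet> (A *\<^sub>v x) = (\<Sum>a<k. \<Sum>b<k. A $$ (a, b) * x $ a * x $ b)"
  using assms by (simp add: scalar_prod_def atLeast0LessThan sum_distrib_left ac_simps)

lemma col_scalar_prod:
  fixes Z :: "real mat"
  assumes "Z \<in> carrier_mat k m" and "x \<in> carrier_vec k" and "j < m"
  shows "col Z j \<bullet> x = (\<Sum>a<k. Z $$ (a, j) * x $ a)"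
  using assms by (simp add: scalar_prod_def atLeast0LessThan)

lemma congruence_invertible:
  fixes B P :: "real mat"
  assumes B: "B \<in> carrier_mat q k" and P: "P \<in> carrier_mat k k"
    and inj: "\<forall>v\<in>carrier_vec q. transpose_mat B *\<^sub>v v = 0\<^sub>v k \<longrightarrow> v = 0\<^sub>v q"
    and pos: "\<forall>x\<in>carrier_vec k. x \<noteq> 0\<^sub>v k \<longrightarrow> x \<bullet> (P *\<^sub>v x) > 0"
    and c: "c \<noteq> 0"
  shows "invertible_mat (c \<cdot>\<^sub>m (B * P * transpose_mat B))"
proof (rule invertible_mat_if_inj)
  show "c \<cdot>\<^sub>m (B * P * transpose_mat B) \<in> carrier_mat q q" using B P by simp
  show "\<forall>v\<in>carrier_vec q. (c \<cdot>\<^sub>m (B * P * transpose_mat B)) *\<^sub>v v = 0\<^sub>v q \<longrightarrow> v = 0\<^sub>v q"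
  proof (intro ballI impI)
    fix v :: "real vec" assume v: "v \<in> carrier_vec q"
      and z: "(c \<cdot>\<^sub>m (B * P * transpose_mat B)) *\<^sub>v v = 0\<^sub>v q"
    let ?w = "transpose_mat B *\<^sub>v v"
    have w: "?w \<in> carrier_vec k" using B v by simp
    have "(B * P * transpose_mat B) *\<^sub>v v = (B * P) *\<^sub>v ?w"
      using B P v by (intro assoc_mult_mat_vec) auto
    also have "\<dots> = B *\<^sub>v (P *\<^sub>v ?w)" using B P w by (intro assoc_mult_mat_vec) auto
    finally have "c \<cdot>\<^sub>v (B *\<^sub>v (P *\<^sub>v ?w)) = 0\<^sub>v q"
      using z B P v by (simp add: smult_mult_mat_vec)
    hence "B *\<^sub>v (P *\<^sub>v ?w) = 0\<^sub>v q" using smult_vec_eq_0D[OF c] by blast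
    hence "?w \<bullet> (P *\<^sub>v ?w) = 0"
      using transpose_vec_mult_scalar[OF B _ v, of "P *\<^sub>v ?w"] P w v by simp
    hence "?w = 0\<^sub>v k" using pos w by auto
    thus "v = 0\<^sub>v q" using inj v by blast
  qed
qed

lemma minv_one_mat: "minv (1\<^sub>m k) = (1\<^sub>m k :: real mat)"
  by (rule minv_eqI) auto

lemma set_cols_eq: "set (cols A) = col A ` {..<dim_col A}"
  unfolding cols_def by auto

lemma inj_if_full_col_rank:
  fixes X :: "real mat"
  assumes X: "X \<in> carrier_mat n k" and rk: "mrank n X = k"
  shows "\<forall>v\<in>carrier_vec k. X *\<^sub>v v = 0\<^sub>v n \<longrightarrow> v = 0\<^sub>v k"
proof (intro ballI impI, rule ccontr)
  interpret vs: vec_space "TYPE(real)" n .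
  fix v :: "real vec"
  assume v: "v \<in> carrier_vec k" and Xv: "X *\<^sub>v v = 0\<^sub>v n" and nz: "v \<noteq> 0\<^sub>v k"
  show False
  proof (cases "distinct (cols X)")
    case True
    thus False
      using vs.full_rank_lin_indpt[OF X rk True] vs.lin_depI[OF X v nz Xv True] by blast
  next
    case False
    obtain S where S: "maximal S (\<lambda>T. T \<subseteq> set (cols X) \<and> vs.lin_indpt T)"
      using maximal_exists[of "(\<lambda>T. T \<subseteq> set (cols X) \<and> vs.lin_indpt T)" "card (set (cols X))" "{}"]
      by (meson List.finite_set card_mono empty_iff empty_subsetI vs.finite_lin_indpt2 rev_finite_subset)
    then have "card S \<le> card (set (cols X))" by (simp add: card_mono maximal_def)
    also have "card (set (cols X)) < length (cols X)" using False card_distinct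
      by (metis card_length order_le_less)
    also have "\<dots> = k" using X by simp
    finally show False using vs.rank_card_indpt[OF X S] rk by simp
  qed
qed

lemma full_col_rank_if_inj:
  fixes X :: "real mat"
  assumes X: "X \<in> carrier_mat n k"
    and inj: "\<forall>v\<in>carrier_vec k. X *\<^sub>v v = 0\<^sub>v n \<longrightarrow> v = 0\<^sub>v k"
  shows "mrank n X = k"
proof -
  interpret vs: vec_space "TYPE(real)" n .
  have dist: "distinct (cols X)"
  proof (rule ccontr)
    assume "\<not> distinct (cols X)"
    then obtain i j where ij: "i \<noteq> j" "i < k" "j < k" "col X i = col X j"
      using X by (auto simp: distinct_conv_nth)
    let ?v = "unit_vec k i - unit_vec k j :: real vec"
    have "X *\<^sub>v ?v = X *\<^sub>v unit_vec k i - X *\<^sub>v unit_vec k j"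
      using X by (simp add: mult_minus_distrib_mat_vec)
    also have "\<dots> = 0\<^sub>v n" using ij mult_unit_vec_eq_col[OF X] X by simp
    finally have "?v = 0\<^sub>v k" using inj by simp
    hence "?v $ i = 0" using ij(2) by simp
    thus False using ij by simp
  qed
  have "vs.lin_indpt (set (cols X))"
    using vs.lin_depE[OF X _ dist] inj by blast
  thus "mrank n X = k" using vs.lin_indpt_full_rank[OF X dist] by blast
qed

lemma full_col_rank_iff_inj:
  fixes X :: "real mat"
  assumes "X \<in> carrier_mat n k"
  shows "mrank n X = k \<longleftrightarrow> (\<forall>v\<in>carrier_vec k. X *\<^sub>v v = 0\<^sub>v n \<longrightarrow> v = 0\<^sub>v k)"
  using inj_if_full_col_rank full_col_rank_if_inj assms by blast

lemma invertible_mat_if_full_rank: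
  fixes Q :: "real mat"
  assumes "Q \<in> carrier_mat k k" and "mrank k Q = k"
  shows "invertible_mat Q"
  using assms full_col_rank_iff_inj invertible_mat_if_inj by blast

lemma full_row_rank_iff_span_cols:
  fixes V :: "real mat"
  assumes V: "V \<in> carrier_mat k n"
  shows "mrank k V = k \<longleftrightarrow> vspan k (set (cols V)) = carrier_vec k"
proof
  interpret vs: vec_space "TYPE(real)" k .
  assume rk: "mrank k V = k"
  obtain U where U: "maximal U (\<lambda>T. T \<subseteq> set (cols V) \<and> vs.lin_indpt T)"
    using maximal_exists[of "(\<lambda>T. T \<subseteq> set (cols V) \<and> vs.lin_indpt T)" "card (set (cols V))" "{}"]
    by (meson List.finite_set card_mono empty_iff empty_subsetI vs.finite_lin_indpt2 rev_finite_subset)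
  have Usub: "U \<subseteq> set (cols V)" and li: "vs.lin_indpt U" using U unfolding maximal_def by auto
  have colsc: "set (cols V) \<subseteq> carrier_vec k" using V cols_dim[of V] by auto
  have "vs.basis U"
    using vs.dim_li_is_basis[OF vs.fin_dim finite_subset[OF Usub] _ li] Usub colsc
      vs.rank_card_indpt[OF V U] rk vs.dim_is_n by auto
  hence "vs.span U = carrier_vec k" unfolding vs.basis_def by simp
  moreover have "vs.span U \<subseteq> vs.span (set (cols V))" by (rule vs.span_is_monotone[OF Usub])
  moreover have "vs.span (set (cols V)) \<subseteq> carrier_vec k" using vs.span_is_subset2 colsc by simp
  ultimately show "vspan k (set (cols V)) = carrier_vec k" by blast
next
  interpret vs: vec_space "TYPE(real)" k .
  assume sp: "vspan k (set (cols V)) = carrier_vec k"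
  have "vs.rank V = vectorspace.dim class_ring (module_vec TYPE(real) k\<lparr>carrier := carrier_vec k\<rparr>)"
    unfolding vs.rank_def using sp by simp
  also have "module_vec TYPE(real) k\<lparr>carrier := carrier_vec k\<rparr> = module_vec TYPE(real) k"
    unfolding module_vec_def by simp
  finally show "mrank k V = k" using vs.dim_is_n by simp
qed

lemma span_cols_eq_carrier_iff_surj:
  fixes A :: "real mat"
  assumes A: "A \<in> carrier_mat k nc"
  shows "vspan k (set (cols A)) = carrier_vec k \<longleftrightarrow> (\<forall>w\<in>carrier_vec k. \<exists>x\<in>carrier_vec nc. A *\<^sub>v x = w)"
proof -
  interpret vs: vec_space "TYPE(real)" k .
  have "vs.span (set (cols A)) = {y\<in>carrier_vec k. \<exists>x\<in>carrier_vec nc. A *\<^sub>v x = y}"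
    using vs.col_space_eq[OF A] A unfolding vs.col_space_def by simp
  thus ?thesis by auto
qed

lemma orthogonal_to_spanning_set_eq_0:
  fixes S :: "real vec set"
  assumes S: "S \<subseteq> carrier_vec k" and sp: "vspan k S = carrier_vec k"
    and x: "x \<in> carrier_vec k" and orth: "\<forall>v\<in>S. v \<bullet> x = 0"
  shows "x = 0\<^sub>v k"
proof -
  interpret vs: vec_space "TYPE(real)" k .
  have "x \<in> vs.orthogonal_complement S" unfolding vs.orthogonal_complement_def
    using x orth S comm_scalar_prod[OF x] by auto
  hence "x \<in> vs.orthogonal_complement (vs.span S)" using vs.in_orthogonal_complement_span[OF S] by simp
  hence "x \<bullet> x = 0" unfolding vs.orthogonal_complement_def using sp x by simp
  thus ?thesis using scalar_prod_self_eq_0_iff[OF x] by simp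
qed

lemma transpose_inj_if_full_row_rank:
  fixes R :: "real mat"
  assumes R: "R \<in> carrier_mat q k" and rk: "mrank q R = q" and v: "v \<in> carrier_vec q"
    and z: "transpose_mat R *\<^sub>v v = 0\<^sub>v k"
  shows "v = 0\<^sub>v q"
proof (rule orthogonal_to_spanning_set_eq_0[OF _ _ v])
  show "set (cols R) \<subseteq> carrier_vec q" using R cols_dim[of R] by auto
  show "vspan q (set (cols R)) = carrier_vec q" using full_row_rank_iff_span_cols[OF R] rk by simp
  have "col R j \<bullet> v = (transpose_mat R *\<^sub>v v) $ j" if "j < k" for j using R that by simp
  thus "\<forall>w\<in>set (cols R). w \<bullet> v = 0" using z R by (auto simp: set_cols_eq)
qed

lemma transpose_mult_inj_if_full_row_rank:
  fixes R G :: "real mat"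
  assumes R: "R \<in> carrier_mat q k" and rk: "mrank q R = q"
    and G: "G \<in> carrier_mat k k" and Gi: "invertible_mat G"
  shows "\<forall>v\<in>carrier_vec q. transpose_mat (R * G) *\<^sub>v v = 0\<^sub>v k \<longrightarrow> v = 0\<^sub>v q"
proof (intro ballI impI)
  fix v :: "real vec" assume v: "v \<in> carrier_vec q" and z: "transpose_mat (R * G) *\<^sub>v v = 0\<^sub>v k"
  have "transpose_mat G *\<^sub>v (transpose_mat R *\<^sub>v v) = 0\<^sub>v k"
    using z transpose_mult[OF R G] G R v by simp
  hence "transpose_mat R *\<^sub>v v = 0\<^sub>v k"
    using invertible_mat_inj[OF _ invertible_mat_transpose[OF G Gi]] G R v by simp
  thus "v = 0\<^sub>v q" by (rule transpose_inj_if_full_row_rank[OF R rk v])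
qed

lemma span_cols_mult_invertible:
  fixes A B :: "real mat"
  assumes A: "A \<in> carrier_mat k nc" and B: "B \<in> carrier_mat k k" and inv: "invertible_mat B"
    and sp: "vspan k (set (cols A)) = carrier_vec k"
  shows "vspan k (set (cols (B * A))) = carrier_vec k"
proof -
  note C = minv_inverse[OF B inv]
  have "\<exists>x\<in>carrier_vec nc. (B * A) *\<^sub>v x = w" if w: "w \<in> carrier_vec k" for w
  proof -
    obtain x where x: "x \<in> carrier_vec nc" "A *\<^sub>v x = minv B *\<^sub>v w"
      using sp C(1) w unfolding span_cols_eq_carrier_iff_surj[OF A] by (meson mult_mat_vec_carrier)
    have "(B * A) *\<^sub>v x = (B * minv B) *\<^sub>v w" using A B C(1) x w by simp
    thus ?thesis using C(2) w x by auto
  qed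
  thus ?thesis using span_cols_eq_carrier_iff_surj[of "B * A" k nc] A B by auto
qed

lemma span_image_mult_invertible:
  fixes S :: "real vec set" and B :: "real mat"
  assumes S: "S \<subseteq> carrier_vec k" "finite S" and B: "B \<in> carrier_mat k k" and inv: "invertible_mat B"
    and sp: "vspan k S = carrier_vec k"
  shows "vspan k ((\<lambda>v. B *\<^sub>v v) ` S) = carrier_vec k"
proof -
  obtain vs where vs: "set vs = S" using finite_list[OF S(2)] by blast
  let ?A = "mat_of_cols k vs"
  have A: "?A \<in> carrier_mat k (length vs)" by simp
  have cA: "set (cols ?A) = S" using vs S by simp
  have "set (cols (B * ?A)) = (\<lambda>v. B *\<^sub>v v) ` S"
    using A B unfolding cA[symmetric] set_cols_eq by force
  thus ?thesis using span_cols_mult_invertible[OF A B inv] cA sp by simp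
qed

lemma orth_support_but_one_eq_0:
  fixes V :: "real mat" and js :: "nat \<Rightarrow> nat"
  assumes V: "V \<in> carrier_mat k n" and rk: "mrank k V = k" and x: "x \<in> carrier_vec k"
    and support: "{j. j < n \<and> col V j \<noteq> 0\<^sub>v k} = js ` {..t}"
    and sum: "(\<Sum>j<n. col V j \<bullet> x) = 0" and j0: "js i0 < n"
    and orth: "\<forall>i\<le>t. i \<noteq> i0 \<longrightarrow> col V (js i) \<bullet> x = 0"
  shows "x = 0\<^sub>v k"
proof -
  have others: "col V j \<bullet> x = 0" if "j < n" "j \<noteq> js i0" for j
  proof (cases "j \<in> js ` {..t}")
    case False
    hence "col V j = 0\<^sub>v k" using support that(1) by blast
    thus ?thesis using x by simp
  qed (use orth that in auto)
  have "(\<Sum>j<n. col V j \<bullet> x) = col V (js i0) \<bullet> x + (\<Sum>j\<in>{..<n} - {js i0}. col V j \<bullet> x)"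
    using j0 by (simp add: sum.remove)
  also have "(\<Sum>j\<in>{..<n} - {js i0}. col V j \<bullet> x) = 0" using others by (intro sum.neutral) auto
  finally have "\<forall>j<n. col V j \<bullet> x = 0" using sum others by auto
  moreover have "vspan k (set (cols V)) = carrier_vec k"
    using full_row_rank_iff_span_cols[OF V] rk by simp
  ultimately show ?thesis
    using orthogonal_to_spanning_set_eq_0[of "set (cols V)" k x] V x cols_dim[of V]
    by (auto simp: set_cols_eq)
qed

lemma span_cols_at_mult_invertible:
  fixes B V :: "real mat" and f :: "nat \<Rightarrow> nat"
  assumes B: "B \<in> carrier_mat k k" and Bi: "invertible_mat B" and V: "V \<in> carrier_mat k n"
    and I: "finite I" "\<forall>i\<in>I. f i < n" and sp: "vspan k ((\<lambda>i. col V (f i)) ` I) = carrier_vec k"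
  shows "vspan k ((\<lambda>i. col (B * V) (f i)) ` I) = carrier_vec k"
proof -
  have "col (B * V) (f i) = B *\<^sub>v col V (f i)" if "i \<in> I" for i using I that col_mult2[OF B V] by auto
  hence "(\<lambda>i. col (B * V) (f i)) ` I = (\<lambda>v. B *\<^sub>v v) ` ((\<lambda>i. col V (f i)) ` I)"
    unfolding image_image by (rule image_cong[OF refl])
  moreover have "(\<lambda>i. col V (f i)) ` I \<subseteq> carrier_vec k" using V by auto
  ultimately show ?thesis using span_image_mult_invertible[OF _ _ B Bi sp] I by simp
qed

definition betahat :: "real mat \<Rightarrow> real vec \<Rightarrow> real vec" where
  "betahat X y = minv (transpose_mat X * X) *\<^sub>v (transpose_mat X *\<^sub>v y)"

lemma uhat_eq: "uhat X y = y - X *\<^sub>v betahat X y"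
  unfolding uhat_def betahat_def ..

lemma gram_invertible:
  fixes X :: "real mat"
  assumes X: "X \<in> carrier_mat n k" and rk: "mrank n X = k"
  shows "invertible_mat (transpose_mat X * X)"
proof (rule invertible_mat_if_inj)
  show "transpose_mat X * X \<in> carrier_mat k k" using X by simp
  show "\<forall>v\<in>carrier_vec k. (transpose_mat X * X) *\<^sub>v v = 0\<^sub>v k \<longrightarrow> v = 0\<^sub>v k"
  proof (intro ballI impI)
    fix v :: "real vec" assume v: "v \<in> carrier_vec k" and z: "(transpose_mat X * X) *\<^sub>v v = 0\<^sub>v k"
    have "X *\<^sub>v v = 0\<^sub>v n"
      using gram_mult_vec_eq_0D[of "transpose_mat X" k n v] X v z by simp
    thus "v = 0\<^sub>v k" using full_col_rank_iff_inj[OF X] rk v by blast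
  qed
qed

lemma transpose_minv_gram:
  fixes X :: "real mat"
  assumes X: "X \<in> carrier_mat n k" and rk: "mrank n X = k"
  shows "transpose_mat (minv (transpose_mat X * X)) = minv (transpose_mat X * X)"
proof -
  let ?G = "transpose_mat X * X"
  have G: "?G \<in> carrier_mat k k" using X by simp
  note C = minv_inverse[OF G gram_invertible[OF X rk]]
  have GT: "transpose_mat ?G = ?G" using X by (simp add: transpose_mult)
  have "minv ?G = transpose_mat (minv ?G)"
  proof (rule minv_eqI[OF G])
    show "transpose_mat (minv ?G) \<in> carrier_mat k k" using C(1) by simp
    show "?G * transpose_mat (minv ?G) = 1\<^sub>m k" using transpose_mult[OF C(1) G] GT C(3) by simp
    show "transpose_mat (minv ?G) * ?G = 1\<^sub>m k" using transpose_mult[OF G C(1)] GT C(2) by simp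
  qed
  thus ?thesis by simp
qed

lemma betahat_carrier:
  fixes X :: "real mat"
  assumes X: "X \<in> carrier_mat n k" and rk: "mrank n X = k" and y: "y \<in> carrier_vec n"
  shows "betahat X y \<in> carrier_vec k"
  using minv_inverse(1)[of "transpose_mat X * X" k] gram_invertible[OF X rk] X y
  unfolding betahat_def by auto

lemma uhat_carrier:
  fixes X :: "real mat"
  assumes X: "X \<in> carrier_mat n k" and rk: "mrank n X = k" and y: "y \<in> carrier_vec n"
  shows "uhat X y \<in> carrier_vec n"
  unfolding uhat_eq using betahat_carrier[OF X rk y] X y by simp

lemma transpose_mult_uhat:
  fixes X :: "real mat"
  assumes X: "X \<in> carrier_mat n k" and rk: "mrank n X = k" and y: "y \<in> carrier_vec n"
  shows "transpose_mat X *\<^sub>v uhat X y = 0\<^sub>v k"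
proof -
  let ?G = "transpose_mat X * X"
  have G: "?G \<in> carrier_mat k k" using X by simp
  note C = minv_inverse[OF G gram_invertible[OF X rk]]
  have b: "betahat X y \<in> carrier_vec k" by (rule betahat_carrier[OF X rk y])
  have "transpose_mat X *\<^sub>v (X *\<^sub>v betahat X y) = ?G *\<^sub>v betahat X y" using X b by simp
  also have "\<dots> = (?G * minv ?G) *\<^sub>v (transpose_mat X *\<^sub>v y)"
    unfolding betahat_def by (rule assoc_mult_mat_vec[symmetric, OF G C(1)]) (use X y in simp)
  also have "\<dots> = transpose_mat X *\<^sub>v y" using C(2) X y by simp
  finally show ?thesis
    unfolding uhat_eq using X y b by (simp add: mult_minus_distrib_mat_vec)
qed

lemma uhat_eqI:
  fixes X :: "real mat"
  assumes X: "X \<in> carrier_mat n k" and rk: "mrank n X = k" and y: "y \<in> carrier_vec n"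
    and b: "b \<in> carrier_vec k" and orth: "transpose_mat X *\<^sub>v (y - X *\<^sub>v b) = 0\<^sub>v k"
  shows "uhat X y = y - X *\<^sub>v b"
proof -
  let ?G = "transpose_mat X * X"
  have G: "?G \<in> carrier_mat k k" using X by simp
  note C = minv_inverse[OF G gram_invertible[OF X rk]]
  have diff: "transpose_mat X *\<^sub>v y - ?G *\<^sub>v b = 0\<^sub>v k"
    using orth X y b by (simp add: mult_minus_distrib_mat_vec)
  have normal: "transpose_mat X *\<^sub>v y = ?G *\<^sub>v b"
  proof (rule eq_vecI)
    fix i assume "i < dim_vec (?G *\<^sub>v b)"
    hence "(transpose_mat X *\<^sub>v y - ?G *\<^sub>v b) $ i = 0" using diff G X by simp
    thus "(transpose_mat X *\<^sub>v y) $ i = (?G *\<^sub>v b) $ i" using \<open>i < _\<close> X G b by simp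
  qed (use X in simp)
  have "betahat X y = (minv ?G * ?G) *\<^sub>v b"
    unfolding betahat_def normal using C(1) G b by simp
  thus ?thesis unfolding uhat_eq using C(3) b by simp
qed

lemma full_col_rank_mult_invertible:
  fixes X Q :: "real mat"
  assumes X: "X \<in> carrier_mat n k" and rk: "mrank n X = k"
    and Q: "Q \<in> carrier_mat k k" and Qi: "invertible_mat Q"
  shows "mrank n (X * Q) = k"
  unfolding full_col_rank_iff_inj[OF mult_carrier_mat[OF X Q]]
proof (intro ballI impI)
  fix v :: "real vec" assume v: "v \<in> carrier_vec k" and z: "(X * Q) *\<^sub>v v = 0\<^sub>v n"
  have "Q *\<^sub>v v = 0\<^sub>v k" using z X Q v full_col_rank_iff_inj[OF X] rk by simp
  thus "v = 0\<^sub>v k" using invertible_mat_inj[OF Q Qi v] by simp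
qed

lemma uhat_mult_invertible:
  fixes X Q :: "real mat"
  assumes X: "X \<in> carrier_mat n k" and rk: "mrank n X = k" and y: "y \<in> carrier_vec n"
    and Q: "Q \<in> carrier_mat k k" and Qi: "invertible_mat Q"
  shows "uhat (X * Q) y = uhat X y"
proof -
  let ?b = "minv Q *\<^sub>v betahat X y"
  note C = minv_inverse[OF Q Qi]
  have b: "betahat X y \<in> carrier_vec k" by (rule betahat_carrier[OF X rk y])
  have "Q *\<^sub>v ?b = (Q * minv Q) *\<^sub>v betahat X y"
    using Q C(1) b by simp
  hence XQb: "(X * Q) *\<^sub>v ?b = X *\<^sub>v betahat X y"
    using X Q C(1,2) b by simp
  have "transpose_mat (X * Q) *\<^sub>v uhat X y = transpose_mat Q *\<^sub>v (transpose_mat X *\<^sub>v uhat X y)"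
    using transpose_mult[OF X Q] X Q uhat_carrier[OF X rk y] by simp
  also have "\<dots> = 0\<^sub>v k" using transpose_mult_uhat[OF X rk y] Q by simp
  finally have "transpose_mat (X * Q) *\<^sub>v (y - (X * Q) *\<^sub>v ?b) = 0\<^sub>v k"
    unfolding XQb uhat_eq[symmetric] .
  from uhat_eqI[OF mult_carrier_mat[OF X Q] full_col_rank_mult_invertible[OF X rk Q Qi] y _ this]
  show ?thesis using C(1) b XQb uhat_eq by simp
qed

lemma Vhat_carrier:
  fixes X :: "real mat"
  assumes "X \<in> carrier_mat n k" and "y \<in> carrier_vec n"
  shows "Vhat X y \<in> carrier_mat k n"
  unfolding Vhat_def using assms by simp

lemma Vhat_index:
  fixes X :: "real mat"
  assumes X: "X \<in> carrier_mat n k" and y: "y \<in> carrier_vec n" and r: "r < k" and j: "j < n"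
  shows "Vhat X y $$ (r, j) = X $$ (j, r) * uhat X y $ j"
proof -
  have "Vhat X y = mat k n (\<lambda>(i,j). transpose_mat X $$ (i,j) * uhat X y $ j)"
    unfolding Vhat_def using mat_diag_mult_right[of "transpose_mat X" k n] X y by simp
  thus ?thesis using r j X by simp
qed

lemma Vhat_mult_invertible:
  fixes X Q :: "real mat"
  assumes X: "X \<in> carrier_mat n k" and rk: "mrank n X = k" and y: "y \<in> carrier_vec n"
    and Q: "Q \<in> carrier_mat k k" and Qi: "invertible_mat Q"
  shows "Vhat (X * Q) y = transpose_mat Q * Vhat X y"
proof -
  let ?D = "mat_diag (dim_vec y) (\<lambda>j. uhat X y $ j)"
  have "Vhat (X * Q) y = (transpose_mat Q * transpose_mat X) * ?D"
    unfolding Vhat_def uhat_mult_invertible[OF X rk y Q Qi] transpose_mult[OF X Q] ..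
  also have "\<dots> = transpose_mat Q * (transpose_mat X * ?D)"
    by (rule assoc_mult_mat[of _ k k _ n _ n]) (use X Q y in auto)
  finally show ?thesis unfolding Vhat_def .
qed

text \<open>The columns of \<open>V_X(y)\<close> sum to \<open>X'u_X(y) = 0\<close>.\<close>

lemma sum_cols_Vhat_scalar_prod:
  fixes X :: "real mat"
  assumes X: "X \<in> carrier_mat n k" and rk: "mrank n X = k" and y: "y \<in> carrier_vec n"
    and x: "x \<in> carrier_vec k"
  shows "(\<Sum>j<n. col (Vhat X y) j \<bullet> x) = 0"
proof -
  let ?u = "uhat X y"
  have V: "Vhat X y \<in> carrier_mat k n" by (rule Vhat_carrier[OF X y])
  have "(\<Sum>j<n. col (Vhat X y) j \<bullet> x) = (\<Sum>j<n. \<Sum>r<k. X $$ (j, r) * ?u $ j * x $ r)"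
    using V x X y by (auto simp: scalar_prod_def Vhat_index atLeast0LessThan intro!: sum.cong)
  also have "\<dots> = (\<Sum>r<k. x $ r * (transpose_mat X *\<^sub>v ?u) $ r)"
    using X uhat_carrier[OF X rk y]
    by (subst sum.swap) (auto simp: scalar_prod_def atLeast0LessThan sum_distrib_left ac_simps
        intro!: sum.cong)
  also have "\<dots> = 0" using transpose_mult_uhat[OF X rk y] by simp
  finally show ?thesis .
qed

section \<open>Positivity of the kernel estimator\<close>

lemma sum_lag_eq_indicator:
  fixes f :: "nat \<Rightarrow> nat \<Rightarrow> 'a :: comm_monoid_add"
  shows "(\<Sum>j\<in>{d..<m}. f j (j - d)) = (\<Sum>j<m. \<Sum>j'<m. if int j - int j' = int d then f j j' else 0)"
proof -
  have "(\<Sum>j<m. \<Sum>j'<m. if int j - int j' = int d then f j j' else 0)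
      = (\<Sum>j<m. if d \<le> j then f j (j - d) else 0)"
  proof (rule sum.cong[OF refl])
    fix j assume "j \<in> {..<m}"
    hence "(\<Sum>j'<m. if int j - int j' = int d then f j j' else 0)
        = (\<Sum>j'<m. if j' = j - d then (if d \<le> j then f j j' else 0) else 0)"
      by (intro sum.cong refl) auto
    also have "\<dots> = (if d \<le> j then f j (j - d) else 0)"
      using \<open>j \<in> _\<close> less_imp_diff_less[of j m d] by (simp add: sum.delta)
    finally show "(\<Sum>j'<m. if int j - int j' = int d then f j j' else 0) = (if d \<le> j then f j (j - d) else 0)" .
  qed
  also have "\<dots> = (\<Sum>j\<in>{j\<in>{..<m}. d \<le> j}. f j (j - d))" by (rule sum.inter_filter[symmetric]) simp
  also have "{j\<in>{..<m}. d \<le> j} = {d..<m}" by auto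
  finally show ?thesis by simp
qed

lemma Gam_index:
  fixes Z :: "real mat"
  assumes Z: "Z \<in> carrier_mat k m" and a: "a < k" and b: "b < k"
  shows "Gam Z i $$ (a, b) = (1 / real m) *
    (\<Sum>j<m. \<Sum>j'<m. if int j - int j' = i then Z $$ (a, j) * Z $$ (b, j') else 0)"
proof (cases "0 \<le> i")
  case True
  then obtain d where "i = int d" by (metis nonneg_eq_int)
  thus ?thesis
    using Z a b sum_lag_eq_indicator[of "\<lambda>j j'. Z $$ (a, j) * Z $$ (b, j')" d m] by (simp add: Gam_def)
next
  case False
  then obtain e where e: "i = - int e" by (metis nonpos_int_cases not_le order_less_imp_le)
  have "(\<Sum>j\<in>{e..<m}. Z $$ (b, j) * Z $$ (a, j - e))
      = (\<Sum>j<m. \<Sum>j'<m. if int j - int j' = int e then Z $$ (b, j) * Z $$ (a, j') else 0)"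
    by (rule sum_lag_eq_indicator)
  also have "\<dots> = (\<Sum>j<m. \<Sum>j'<m. if int j - int j' = i then Z $$ (a, j) * Z $$ (b, j') else 0)"
    by (subst sum.swap) (auto simp: e mult.commute intro!: sum.cong)
  finally show ?thesis using Z a b False e by (simp add: Gam_def)
qed

lemma Gam_quadratic_form:
  fixes Z :: "real mat"
  assumes Z: "Z \<in> carrier_mat k m" and x: "x \<in> carrier_vec k"
  shows "x \<bullet> (Gam Z i *\<^sub>v x) = (1 / real m) *
     (\<Sum>j<m. \<Sum>j'<m. if int j - int j' = i then (col Z j \<bullet> x) * (col Z j' \<bullet> x) else 0)"
proof -
  have G: "Gam Z i \<in> carrier_mat k k" using Z by (simp add: Gam_def)
  have "x \<bullet> (Gam Z i *\<^sub>v x) = (1 / real m) * (\<Sum>a<k. \<Sum>b<k. \<Sum>j<m. \<Sum>j'<m.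
      if int j - int j' = i then (Z $$ (a, j) * x $ a) * (Z $$ (b, j') * x $ b) else 0)"
    unfolding quadratic_form_eq[OF G x] using Z
    by (simp add: Gam_index sum_distrib_left sum_distrib_right ac_simps if_distrib cong: if_cong)
  also have "\<dots> = (1 / real m) * (\<Sum>j<m. \<Sum>j'<m. \<Sum>a<k. \<Sum>b<k.
      if int j - int j' = i then (Z $$ (a, j) * x $ a) * (Z $$ (b, j') * x $ b) else 0)"
    by (subst (2) sum.swap, subst sum.swap, subst (3) sum.swap, subst (2) sum.swap) simp
  also have "\<dots> = (1 / real m) *
     (\<Sum>j<m. \<Sum>j'<m. if int j - int j' = i then (col Z j \<bullet> x) * (col Z j' \<bullet> x) else 0)"
    using Z x by (auto simp: col_scalar_prod sum_product intro!: sum.cong)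
  finally show ?thesis .
qed

lemma Psi_quadratic_form:
  fixes Z :: "real mat"
  assumes Z: "Z \<in> carrier_mat k m" and x: "x \<in> carrier_vec k"
  shows "x \<bullet> (Psi \<kappa> M Z *\<^sub>v x) = (1 / real m) *
     (\<Sum>j<m. \<Sum>j'<m. kw \<kappa> M (int j - int j') * (col Z j \<bullet> x) * (col Z j' \<bullet> x))"
proof -
  let ?I = "{- (int m - 1) .. int m - 1}"
  let ?z = "\<lambda>j. col Z j \<bullet> x"
  have P: "Psi \<kappa> M Z \<in> carrier_mat k k" using Z by (simp add: Psi_def)
  have G: "Gam Z i \<in> carrier_mat k k" for i using Z by (simp add: Gam_def)
  have "x \<bullet> (Psi \<kappa> M Z *\<^sub>v x) = (\<Sum>i\<in>?I. kw \<kappa> M i * (x \<bullet> (Gam Z i *\<^sub>v x)))"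
    unfolding quadratic_form_eq[OF P x] quadratic_form_eq[OF G x] using Z
    by (simp add: Psi_def sum_distrib_left sum_distrib_right ac_simps)
      (subst sum.swap, rule sum.cong[OF refl], subst sum.swap, simp)
  also have "\<dots> = (1 / real m) *
      (\<Sum>j<m. \<Sum>j'<m. \<Sum>i\<in>?I. if int j - int j' = i then kw \<kappa> M i * ?z j * ?z j' else 0)"
    unfolding Gam_quadratic_form[OF Z x]
    by (simp add: sum_distrib_left if_distrib ac_simps cong: if_cong)
      (subst sum.swap, rule sum.cong[OF refl], subst sum.swap, simp add: ac_simps)
  also have "\<dots> = (1 / real m) * (\<Sum>j<m. \<Sum>j'<m. kw \<kappa> M (int j - int j') * ?z j * ?z j')"
    by (auto simp: sum.delta' intro!: sum.cong)
  finally show ?thesis .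
qed

lemma kw_quadratic_form_pos:
  fixes z :: "nat \<Rightarrow> real"
  assumes kern: "kernel_ok \<kappa>" and M: "0 \<le> M" and nz: "\<exists>j<m. z j \<noteq> 0"
  shows "0 < (\<Sum>j<m. \<Sum>j'<m. kw \<kappa> M (int j - int j') * z j * z j')"
proof (cases "M = 0")
  case True
  have "kw \<kappa> M (int j - int j') * z j * z j' = (if j' = j then (z j)\<^sup>2 else 0)" for j j'
    using True by (simp add: kw_def power2_eq_square)
  hence "(\<Sum>j<m. \<Sum>j'<m. kw \<kappa> M (int j - int j') * z j * z j') = (\<Sum>j<m. (z j)\<^sup>2)"
    by (simp add: sum.delta)
  also have "\<dots> > 0" using nz by (auto intro!: sum_pos2)
  finally show ?thesis .
next
  case False
  hence "0 < (\<Sum>j<m. \<Sum>j'<m. z j * z j' * \<kappa> ((real j - real j') / M))"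
    using kern M nz unfolding kernel_ok_def by auto
  also have "\<dots> = (\<Sum>j<m. \<Sum>j'<m. kw \<kappa> M (int j - int j') * z j * z j')"
    using False by (simp add: kw_def ac_simps)
  finally show ?thesis .
qed

lemma Psi_quadratic_form_pos:
  fixes Z :: "real mat"
  assumes Z: "Z \<in> carrier_mat k m" and x: "x \<in> carrier_vec k" and x_nz: "x \<noteq> 0\<^sub>v k"
    and orth: "\<forall>x\<in>carrier_vec k. (\<forall>j<m. col Z j \<bullet> x = 0) \<longrightarrow> x = 0\<^sub>v k"
    and kern: "kernel_ok \<kappa>" and M: "0 \<le> M"
  shows "x \<bullet> (Psi \<kappa> M Z *\<^sub>v x) > 0"
proof -
  obtain j0 where "j0 < m" "col Z j0 \<bullet> x \<noteq> 0" using orth x x_nz by blast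
  thus ?thesis unfolding Psi_quadratic_form[OF Z x]
    using kw_quadratic_form_pos[OF kern M, of m "\<lambda>j. col Z j \<bullet> x"] by (auto intro!: divide_pos_pos)
qed

section \<open>Scores with well separated support\<close>

lemma sum_blocks:
  fixes f :: "nat \<Rightarrow> 'a :: comm_monoid_add"
  shows "(\<Sum>i<k*p. f i) = (\<Sum>l<p. \<Sum>r<k. f (l*k + r))"
proof -
  have "(\<Sum>i<k*p. f i) = (\<Sum>l<p. \<Sum>i\<in>{l*k..<l*k+k}. f i)"
    using sum.nat_group[of f k p] by (simp add: mult.commute)
  also have "\<dots> = (\<Sum>l<p. \<Sum>r<k. f (l*k + r))"
  proof (rule sum.cong[OF refl])
    fix l
    have "(\<Sum>i\<in>{0+l*k..<k+l*k}. f i) = (\<Sum>i\<in>{0..<k}. f (i + l*k))"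
      by (rule sum.shift_bounds_nat_ivl)
    thus "(\<Sum>i\<in>{l*k..<l*k+k}. f i) = (\<Sum>r<k. f (l*k + r))"
      by (simp add: add.commute atLeast0LessThan)
  qed
  finally show ?thesis .
qed

lemma block_index_less: "(l::nat) < p \<Longrightarrow> r < k \<Longrightarrow> l * k + r < k * p"
proof -
  assume "l < p" and "r < k"
  hence "l * k + r < Suc l * k" by simp
  also have "\<dots> \<le> p * k" using \<open>l < p\<close> by (intro mult_le_mono1) simp
  finally show ?thesis by (simp add: mult.commute)
qed

lemma strict_mono_on_atMost_less:
  fixes f :: "nat \<Rightarrow> nat"
  assumes "strict_mono_on {..t} f" and "i \<le> t" and "f t < N"
  shows "f i < N"
  using assms unfolding strict_mono_on_def by (metis atMost_iff le_less less_trans order_refl)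

lemma Vp_mat_carrier: "V \<in> carrier_mat k n \<Longrightarrow> Vp_mat p V \<in> carrier_mat k (n - p)"
  unfolding Vp_mat_def by auto

lemma Vp_mat_index:
  fixes V :: "real mat"
  assumes "V \<in> carrier_mat k n" and "r < k" and "j < n - p"
  shows "Vp_mat p V $$ (r, j) = V $$ (r, j + p)"
  using assms unfolding Vp_mat_def by simp

locale sparse_scores =
  fixes n k p t :: nat and js :: "nat \<Rightarrow> nat" and V :: "real mat"
  assumes V: "V \<in> carrier_mat k n"
    and mono: "strict_mono_on {..t} js" and js0: "js 0 = 0" and js_last: "js t < n"
    and support: "{j. j < n \<and> col V j \<noteq> 0\<^sub>v k} = js ` {..t}"
    and gaps: "\<forall>i<t. p + 1 \<le> js (Suc i) - js i"
    and tail: "js t + p \<le> n"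
    and p_pos: "1 \<le> p" and t_pos: "1 \<le> t"
    and orth_init: "\<forall>x\<in>carrier_vec k. (\<forall>i<t. col V (js i) \<bullet> x = 0) \<longrightarrow> x = 0\<^sub>v k"
    and orth_tail: "\<forall>x\<in>carrier_vec k. (\<forall>i\<in>{1..t}. col V (js i) \<bullet> x = 0) \<longrightarrow> x = 0\<^sub>v k"
begin

lemma js_spacing: "a \<le> b \<Longrightarrow> b \<le> t \<Longrightarrow> js a + (b - a) * (p + 1) \<le> js b"
proof (induction b)
  case (Suc b)
  show ?case
  proof (cases "a = Suc b")
    case False
    hence "a \<le> b" using Suc.prems by simp
    moreover have "p + 1 \<le> js (Suc b) - js b" using gaps Suc.prems by auto
    moreover have "js b < js (Suc b)" using mono Suc.prems unfolding strict_mono_on_def by auto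
    ultimately show ?thesis using Suc by (simp add: Suc_diff_le)
  qed simp
qed simp

lemma js_mono: "a \<le> b \<Longrightarrow> b \<le> t \<Longrightarrow> js a \<le> js b"
  using js_spacing by fastforce

lemma js_less: "i \<le> t \<Longrightarrow> js i < n"
  using js_mono js_last le_less_trans by blast

lemma js_ge:
  assumes "1 \<le> i" and "i \<le> t"
  shows "p + 1 \<le> js i"
proof -
  have "p + 1 \<le> i * (p + 1)" using mult_le_mono1[of 1 i "p + 1"] assms by simp
  thus ?thesis using js_spacing[of 0 i] js0 assms by simp
qed

lemma support_spacing:
  assumes c: "c \<in> js ` {..t}" and c': "c' \<in> js ` {..t}" and lt: "c < c'"
  shows "c + p + 1 \<le> c'"
proof -
  obtain a b where a: "a \<le> t" "c = js a" and b: "b \<le> t" "c' = js b" using c c' by auto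
  have "a < b" using js_mono[of b a] a b lt by (meson not_le)
  hence "p + 1 \<le> (b - a) * (p + 1)" using mult_le_mono1[of 1 "b - a" "p + 1"] by simp
  thus ?thesis using js_spacing[of a b] a b by linarith
qed

lemma in_support_if_entry_nonzero:
  assumes r: "r < k" and c: "c < n" and nz: "V $$ (r, c) \<noteq> 0"
  shows "c \<in> js ` {..t}"
proof -
  have "col V c $ r \<noteq> 0" using V r c nz by simp
  hence "col V c \<noteq> 0\<^sub>v k" using r by auto
  thus ?thesis using support c by blast
qed

lemma col_eq_0_off_support: "c < n \<Longrightarrow> c \<notin> js ` {..t} \<Longrightarrow> col V c = 0\<^sub>v k"
  using support by blast

lemma entry_eq_0_off_support:
  assumes "r < k" and "c < n" and "c \<notin> js ` {..t}"
  shows "V $$ (r, c) = 0"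
proof -
  have "V $$ (r, c) = col V c $ r" using V assms by simp
  thus ?thesis using col_eq_0_off_support assms by simp
qed

lemma k_pos: "0 < k"
proof (rule ccontr)
  assume "\<not> 0 < k"
  hence "col V (js 0) = 0\<^sub>v k" using V by (intro eq_vecI) auto
  moreover have "js 0 \<in> {j. j < n \<and> col V j \<noteq> 0\<^sub>v k}" using support by auto
  ultimately show False by simp
qed

lemma entry_mult_close_eq_0:
  assumes r: "r < k" and r': "r' < k" and c': "c' < n" and lt: "c < c'" and le: "c' \<le> c + p"
  shows "V $$ (r, c) * V $$ (r', c') = 0"
proof (rule ccontr)
  assume "V $$ (r, c) * V $$ (r', c') \<noteq> 0"
  hence "c \<in> js ` {..t}" "c' \<in> js ` {..t}"
    using in_support_if_entry_nonzero r r' c' lt by auto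
  from support_spacing[OF this lt] le show False by simp
qed

abbreviation "V1 \<equiv> V1_mat p V"
abbreviation "Vp \<equiv> Vp_mat p V"

lemma V1_carrier: "V1 \<in> carrier_mat (k * p) (n - p)"
  unfolding V1_mat_def using V by simp

lemma Vp_carrier: "Vp \<in> carrier_mat k (n - p)"
  by (rule Vp_mat_carrier[OF V])

lemma V1_index: "i < k * p \<Longrightarrow> j < n - p \<Longrightarrow> V1 $$ (i, j) = V $$ (i mod k, j + p - 1 - i div k)"
  unfolding V1_mat_def using V by simp

lemma Vp_index: "r < k \<Longrightarrow> j < n - p \<Longrightarrow> Vp $$ (r, j) = V $$ (r, j + p)"
  by (rule Vp_mat_index[OF V])

text \<open>Every entry of \<open>Vp V1'\<close> pairs two entries of \<open>V\<close> whose columns are between \<open>1\<close> and \<open>p\<close> apart.\<close>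

lemma Vp_mult_transpose_V1: "Vp * transpose_mat V1 = 0\<^sub>m k (k * p)"
proof (rule eq_matI)
  fix r i assume "r < dim_row (0\<^sub>m k (k * p))" and "i < dim_col (0\<^sub>m k (k * p))"
  hence r: "r < k" and i: "i < k * p" by auto
  have l: "i div k < p" and im: "i mod k < k"
    using i r by (auto simp: div_less_iff_less_mult mult.commute)
  have "(Vp * transpose_mat V1) $$ (r, i) = (\<Sum>j<n-p. Vp $$ (r, j) * V1 $$ (i, j))"
    using r i Vp_carrier V1_carrier by (simp add: scalar_prod_def atLeast0LessThan)
  also have "\<dots> = 0"
  proof (rule sum.neutral, rule ballI)
    fix j assume "j \<in> {..<n-p}"
    hence j: "j < n - p" by simp
    have "V $$ (i mod k, j + p - 1 - i div k) * V $$ (r, j + p) = 0"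
      by (rule entry_mult_close_eq_0[OF im r]) (use j l p_pos in auto)
    thus "Vp $$ (r, j) * V1 $$ (i, j) = 0" using Vp_index[OF r j] V1_index[OF i j] by (simp add: mult.commute)
  qed
  finally show "(Vp * transpose_mat V1) $$ (r, i) = 0\<^sub>m k (k * p) $$ (r, i)" using r i by simp
qed (use Vp_carrier V1_carrier in auto)

definition block :: "real vec \<Rightarrow> nat \<Rightarrow> real vec" where
  "block x l = vec k (\<lambda>r. x $ (l * k + r))"

lemma transpose_V1_mult_vec:
  assumes x: "x \<in> carrier_vec (k * p)" and j: "j < n - p"
  shows "(transpose_mat V1 *\<^sub>v x) $ j = (\<Sum>l<p. col V (j + p - 1 - l) \<bullet> block x l)"
proof -
  have "(transpose_mat V1 *\<^sub>v x) $ j = (\<Sum>i<k*p. V1 $$ (i, j) * x $ i)"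
    using V1_carrier x j by (simp add: scalar_prod_def atLeast0LessThan)
  also have "\<dots> = (\<Sum>l<p. \<Sum>r<k. V1 $$ (l*k + r, j) * x $ (l*k + r))"
    by (rule sum_blocks)
  also have "\<dots> = (\<Sum>l<p. col V (j + p - 1 - l) \<bullet> block x l)"
  proof (rule sum.cong[OF refl])
    fix l assume l: "l \<in> {..<p}"
    have "(\<Sum>r<k. V1 $$ (l*k + r, j) * x $ (l*k + r)) = (\<Sum>r<k. V $$ (r, j + p - 1 - l) * x $ (l*k + r))"
    proof (rule sum.cong[OF refl])
      fix r assume r: "r \<in> {..<k}"
      have "(l*k + r) mod k = r" "(l*k + r) div k = l" using r by auto
      thus "V1 $$ (l*k + r, j) * x $ (l*k + r) = V $$ (r, j + p - 1 - l) * x $ (l*k + r)"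
        using V1_index[OF block_index_less j] l r by simp
    qed
    also have "\<dots> = col V (j + p - 1 - l) \<bullet> block x l"
      using V j unfolding block_def scalar_prod_def by (auto simp: atLeast0LessThan intro!: sum.cong)
    finally show "(\<Sum>r<k. V1 $$ (l*k + r, j) * x $ (l*k + r)) = col V (j + p - 1 - l) \<bullet> block x l" .
  qed
  finally show ?thesis .
qed

text \<open>Only the lag \<open>l\<close> term of the sum above survives: the other columns it involves lie
  within distance \<open>p\<close> of the support point \<open>c\<close>.\<close>

lemma transpose_V1_mult_vec_support:
  assumes x: "x \<in> carrier_vec (k * p)" and c: "c \<in> js ` {..t}" and l: "l < p"
    and lo: "p \<le> c + l + 1" and hi: "c + l + 1 < n"
  shows "(transpose_mat V1 *\<^sub>v x) $ (c + l + 1 - p) = col V c \<bullet> block x l"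
proof -
  define j where "j = c + l + 1 - p"
  have j: "j < n - p" and jp: "j + p = c + l + 1" and jc: "j + p - 1 - l = c" "j + p - Suc l = c"
    using lo hi unfolding j_def by auto
  have "(transpose_mat V1 *\<^sub>v x) $ j = col V c \<bullet> block x l
      + (\<Sum>l'\<in>{..<p} - {l}. col V (j + p - 1 - l') \<bullet> block x l')"
    unfolding transpose_V1_mult_vec[OF x j] using l by (simp add: sum.remove jc)
  also have "(\<Sum>l'\<in>{..<p} - {l}. col V (j + p - 1 - l') \<bullet> block x l') = 0"
  proof (rule sum.neutral, rule ballI)
    fix l' assume l': "l' \<in> {..<p} - {l}"
    let ?c = "j + p - 1 - l'"
    have "?c \<notin> js ` {..t}"
    proof
      assume c': "?c \<in> js ` {..t}"
      show False
      proof (cases "l' < l")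
        case True
        hence "c < ?c" using jp by auto
        thus False using support_spacing[OF c c'] jp l by auto
      next
        case False
        hence "?c < c" using jp l' by auto
        thus False using support_spacing[OF c' c] jp l' by auto
      qed
    qed
    moreover have "?c < n" using j l' p_pos by auto
    ultimately show "col V ?c \<bullet> block x l' = 0"
      using col_eq_0_off_support by (simp add: block_def)
  qed
  finally show ?thesis unfolding j_def by simp
qed

lemma transpose_V1_kernel_block:
  assumes x: "x \<in> carrier_vec (k * p)" and z: "transpose_mat V1 *\<^sub>v x = 0\<^sub>v (n - p)" and l: "l < p"
  shows "block x l = 0\<^sub>v k"
proof -
  have orth: "col V c \<bullet> block x l = 0" if "c \<in> js ` {..t}" "p \<le> c + l + 1" "c + l + 1 < n" for c
    using transpose_V1_mult_vec_support[OF x that(1) l that(2,3)] z that(2,3) by simp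
  have bl: "block x l \<in> carrier_vec k" by (simp add: block_def)
  show ?thesis
  proof (cases "l = p - 1")
    case True
    have "col V (js i) \<bullet> block x l = 0" if "i < t" for i
    proof -
      have "js i + p + 1 \<le> js t"
        using support_spacing[of "js i" "js t"] mono that by (auto simp: strict_mono_on_def)
      thus ?thesis using orth[of "js i"] True js_last p_pos that by auto
    qed
    thus ?thesis using orth_init bl by auto
  next
    case False
    hence "\<forall>i\<in>{1..t}. col V (js i) \<bullet> block x l = 0"
      using orth js_ge js_mono[of _ t] tail l by force
    thus ?thesis using orth_tail bl by blast
  qed
qed

lemma V1_gram_invertible: "invertible_mat (V1 * transpose_mat V1)"
proof (rule invertible_mat_if_inj)
  show "V1 * transpose_mat V1 \<in> carrier_mat (k * p) (k * p)" using V1_carrier by simp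
  show "\<forall>x\<in>carrier_vec (k * p). (V1 * transpose_mat V1) *\<^sub>v x = 0\<^sub>v (k * p) \<longrightarrow> x = 0\<^sub>v (k * p)"
  proof (intro ballI impI)
    fix x :: "real vec"
    assume x: "x \<in> carrier_vec (k * p)" and eq: "(V1 * transpose_mat V1) *\<^sub>v x = 0\<^sub>v (k * p)"
    from gram_mult_vec_eq_0D[OF V1_carrier x eq]
    have z: "transpose_mat V1 *\<^sub>v x = 0\<^sub>v (n - p)" .
    show "x = 0\<^sub>v (k * p)"
    proof (rule eq_vecI)
      fix i assume "i < dim_vec (0\<^sub>v (k * p))"
      hence i: "i < k * p" by simp
      hence "0 < k" by (cases k) auto
      hence l: "i div k < p" and r: "i mod k < k"
        using i by (auto simp: div_less_iff_less_mult mult.commute)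
      have "block x (i div k) $ (i mod k) = 0"
        using transpose_V1_kernel_block[OF x z l] r by simp
      thus "x $ i = 0\<^sub>v (k * p) $ i" using i r by (simp add: block_def)
    qed (use x in simp)
  qed
qed

lemma col_Vp: "j < n - p \<Longrightarrow> col Vp j = col V (j + p)"
  by (rule eq_vecI) (use Vp_carrier V in \<open>auto simp: Vp_index\<close>)

lemma orth_cols_Vp_eq_0:
  assumes x: "x \<in> carrier_vec k" and orth: "\<forall>j<n - p. col Vp j \<bullet> x = 0"
  shows "x = 0\<^sub>v k"
proof -
  have "col V (js i) \<bullet> x = 0" if i: "i \<in> {1..t}" for i
  proof -
    have j: "js i - p < n - p" and "js i - p + p = js i" using js_ge[of i] js_less[of i] i by auto
    thus ?thesis using col_Vp[OF j] orth by metis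
  qed
  thus ?thesis using orth_tail x by blast
qed

lemma Vp_first_col_eq_0:
  assumes r: "r < k"
  shows "Vp $$ (r, 0) = 0"
proof -
  have "p < n" using js_ge[of 1] js_less[of 1] t_pos by simp
  moreover have "p \<notin> js ` {..t}"
  proof
    assume "p \<in> js ` {..t}"
    then obtain i where "i \<le> t" "js i = p" by auto
    thus False using js_ge[of i] js0 p_pos by (cases "i = 0") auto
  qed
  ultimately have "col V p $ r = 0" using col_eq_0_off_support[of p] r by simp
  thus ?thesis using Vp_index[OF r, of 0] \<open>p < n\<close> V r by simp
qed

lemma rho_Vp_eq_0:
  assumes i: "i < k"
  shows "rho Vp i = 0"
proof -
  have "Vp $$ (i, j) * Vp $$ (i, j - 1) = 0" if j: "j \<in> {1..<n - p}" for j
  proof -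
    have "V $$ (i, j - 1 + p) * V $$ (i, j + p) = 0"
      by (rule entry_mult_close_eq_0[OF i i]) (use j p_pos in auto)
    moreover have "Vp $$ (i, j) = V $$ (i, j + p)" by (rule Vp_index[OF i]) (use j in simp)
    moreover have "Vp $$ (i, j - 1) = V $$ (i, j - 1 + p)" by (rule Vp_index[OF i]) (use j in auto)
    ultimately show ?thesis by (metis mult.commute)
  qed
  hence "(\<Sum>j\<in>{1..<dim_col Vp}. Vp $$ (i, j) * Vp $$ (i, j - 1)) = 0"
    using Vp_carrier by (intro sum.neutral) auto
  thus ?thesis unfolding rho_def by simp
qed

lemma Vp_rows_nonzero:
  assumes tl: "js t + p < n"
  shows "\<forall>i<k. \<exists>j<dim_col Vp - 1. Vp $$ (i, j) \<noteq> 0"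
proof (intro allI impI, rule ccontr)
  fix i assume i: "i < k" and "\<not> (\<exists>j<dim_col Vp - 1. Vp $$ (i, j) \<noteq> 0)"
  hence z: "\<forall>j<n - p - 1. Vp $$ (i, j) = 0" using Vp_carrier by auto
  have "col V (js l) \<bullet> unit_vec k i = 0" if l: "l \<in> {1..t}" for l
  proof -
    have ge: "p + 1 \<le> js l" and le: "js l \<le> js t" using l js_ge[of l] js_mono[of l t] by auto
    have j: "js l - p < n - p - 1" using ge le tl p_pos by linarith
    have "js l - p + p = js l" using ge by simp
    have "col V (js l) \<bullet> unit_vec k i = V $$ (i, js l)" using i V js_less[of l] l by simp
    also have "\<dots> = 0" using Vp_index[OF i, of "js l - p"] z j \<open>js l - p + p = js l\<close> by simp
    finally show ?thesis .
  qed
  hence "unit_vec k i = (0\<^sub>v k :: real vec)" using orth_tail by simp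
  thus False using i by (metis index_unit_vec(1) index_zero_vec(1) zero_neq_one)
qed

end

lemma Ahat_Zhat_sparse_scores:
  assumes "sparse_scores n k p t js (Vhat X y)"
  shows "Ahat p X y = Some (0\<^sub>m k (k * p))" and "Zhat p X y = Some (Vp_mat p (Vhat X y))"
proof -
  interpret sparse_scores n k p t js "Vhat X y" by fact
  have "minv (V1 * transpose_mat V1) \<in> carrier_mat (k * p) (k * p)"
    using minv_inverse(1)[OF _ V1_gram_invertible] V1_carrier by simp
  thus Ah: "Ahat p X y = Some (0\<^sub>m k (k * p))"
    unfolding Ahat_def Let_def using V1_gram_invertible Vp_mult_transpose_V1 by simp
  have "Vp - 0\<^sub>m k (k * p) * V1 = Vp" using V1_carrier Vp_carrier by auto
  thus "Zhat p X y = Some Vp" unfolding Zhat_def Ah by simp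
qed

text \<open>For \<open>t = k\<close>, since the columns of \<open>V\<close> sum to zero, any \<open>t\<close> of the \<open>t + 1\<close> nonzero
  columns span.\<close>

lemma sparse_scores_if_condA:
  fixes X :: "real mat"
  assumes X: "X \<in> carrier_mat n k" and rk: "mrank n X = k" and y: "y \<in> carrier_vec n"
    and c: "condA p X y t js" and tk: "k \<le> t" and k_pos: "1 \<le> k" and p_pos: "1 \<le> p"
  shows "sparse_scores n k p t js (Vhat X y)"
proof -
  let ?V = "Vhat X y"
  have V: "?V \<in> carrier_mat k n" by (rule Vhat_carrier[OF X y])
  have dims: "dim_vec y = n" "dim_col X = k" using X y by auto
  note cA = c[unfolded condA_def Let_def dims]
  have mono: "strict_mono_on {..t} js" and js_last: "js t < n"
    and support: "{j. j < n \<and> col ?V j \<noteq> 0\<^sub>v k} = js ` {..t}"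
    and A3: "if t = k then mrank k ?V = k
       else vspan k ((\<lambda>i. col ?V (js i)) ` {..<t}) = carrier_vec k \<and>
            vspan k ((\<lambda>i. col ?V (js i)) ` {1..t}) = carrier_vec k"
    using cA by auto
  have col_carrier: "col ?V j \<in> carrier_vec k" for j using V by auto
  have orth_but_one: "x = 0\<^sub>v k"
    if teq: "t = k" and x: "x \<in> carrier_vec k" and i0: "i0 \<le> t"
      and orth: "\<forall>i\<le>t. i \<noteq> i0 \<longrightarrow> col ?V (js i) \<bullet> x = 0" for x i0
    using orth_support_but_one_eq_0[OF V _ x support sum_cols_Vhat_scalar_prod[OF X rk y x]
        strict_mono_on_atMost_less[OF mono i0 js_last] orth] A3 teq by simp
  have orth_init: "x = 0\<^sub>v k" if x: "x \<in> carrier_vec k" and orth: "\<forall>i<t. col ?V (js i) \<bullet> x = 0" for x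
  proof (cases "t = k")
    case True
    thus ?thesis using orth_but_one[OF True x, of t] orth by auto
  next
    case False
    thus ?thesis
      using orthogonal_to_spanning_set_eq_0[of "(\<lambda>i. col ?V (js i)) ` {..<t}", OF _ _ x]
        A3 orth col_carrier by auto
  qed
  have orth_tail: "x = 0\<^sub>v k" if x: "x \<in> carrier_vec k" and orth: "\<forall>i\<in>{1..t}. col ?V (js i) \<bullet> x = 0" for x
  proof (cases "t = k")
    case True
    thus ?thesis using orth_but_one[OF True x, of 0] orth by auto
  next
    case False
    thus ?thesis
      using orthogonal_to_spanning_set_eq_0[of "(\<lambda>i. col ?V (js i)) ` {1..t}", OF _ _ x]
        A3 orth col_carrier by auto
  qed
  show ?thesis
    by unfold_locales (use V cA tk k_pos p_pos orth_init orth_tail in \<open>auto simp: dims\<close>)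
qed

lemma sumA_zero: "sumA p (0\<^sub>m k (k * p)) = 0\<^sub>m k k"
  by (rule eq_matI) (auto simp: sumA_def block_index_less intro!: sum.neutral)

lemma bw_val_nonneg:
  assumes "bw_ok k b" and "bw_val b n Z = Some M"
  shows "0 \<le> M"
  using assms by (cases b) (auto simp: Let_def split: if_splits)

lemma Omega_hat_sparse_scores:
  fixes X R :: "real mat"
  assumes X: "X \<in> carrier_mat n k" and rk: "mrank n X = k" and y: "y \<in> carrier_vec n"
    and ss: "sparse_scores n k p t js (Vhat X y)" and R: "R \<in> carrier_mat q k"
    and bw: "bw_val b n (Vp_mat p (Vhat X y)) = Some M"
  shows "Omega_hat \<kappa> b p R X y = Some (real n \<cdot>\<^sub>m (R * minv (transpose_mat X * X)
           * Psi \<kappa> M (Vp_mat p (Vhat X y)) * minv (transpose_mat X * X) * transpose_mat R))"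
proof -
  interpret sparse_scores n k p t js "Vhat X y" by fact
  let ?G = "minv (transpose_mat X * X)"
  have G: "?G \<in> carrier_mat k k"
    using minv_inverse(1)[OF _ gram_invertible[OF X rk]] X by simp
  have P: "Psi \<kappa> M Vp \<in> carrier_mat k k" using Vp_carrier by (simp add: Psi_def)
  have "Vp - 0\<^sub>m k (k * p) * V1 = Vp" using V1_carrier Vp_carrier by auto
  moreover have "1\<^sub>m k - 0\<^sub>m k k = (1\<^sub>m k :: real mat)" by auto
  moreover have "invertible_mat (1\<^sub>m k :: real mat)" by (rule invertible_matI[of _ k "1\<^sub>m k"]) auto
  moreover have "R * ?G * 1\<^sub>m k = R * ?G" and "R * ?G * Psi \<kappa> M Vp * 1\<^sub>m k = R * ?G * Psi \<kappa> M Vp"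
    using R G P by auto
  ultimately show ?thesis
    unfolding Omega_hat_def Ahat_Zhat_sparse_scores(1)[OF ss] Let_def
    using X y bw by (simp add: sumA_zero minv_one_mat)
qed

lemma notin_Nstar_if_bw_defined:
  fixes X R :: "real mat"
  assumes X: "X \<in> carrier_mat n k" and rk: "mrank n X = k" and y: "y \<in> carrier_vec n"
    and ss: "sparse_scores n k p t js (Vhat X y)"
    and R: "R \<in> carrier_mat q k" and rkR: "mrank q R = q" and kern: "kernel_ok \<kappa>"
    and ok: "bw_ok k b" and bw_def: "bw_val b n (Vp_mat p (Vhat X y)) \<noteq> None"
  shows "y \<notin> Nstar \<kappa> b p R X"
proof -
  interpret sparse_scores n k p t js "Vhat X y" by fact
  obtain M where bw: "bw_val b n Vp = Some M" using bw_def by blast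
  have M: "0 \<le> M" by (rule bw_val_nonneg[OF ok bw])
  let ?G = "minv (transpose_mat X * X)"
  let ?P = "Psi \<kappa> M Vp"
  have XX: "transpose_mat X * X \<in> carrier_mat k k" using X by simp
  have G: "?G \<in> carrier_mat k k" and Gi: "invertible_mat ?G"
    using minv_inverse(1)[OF XX gram_invertible[OF X rk]] invertible_mat_minv[OF XX gram_invertible[OF X rk]]
    by auto
  have RG: "R * ?G \<in> carrier_mat q k" using R G by simp
  have P: "?P \<in> carrier_mat k k" using Vp_carrier by (simp add: Psi_def)
  have RGT: "transpose_mat (R * ?G) = ?G * transpose_mat R"
    using transpose_mult[OF R G] transpose_minv_gram[OF X rk] by simp
  have "invertible_mat (real n \<cdot>\<^sub>m (R * ?G * ?P * transpose_mat (R * ?G)))"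
  proof (rule congruence_invertible[OF RG P transpose_mult_inj_if_full_row_rank[OF R rkR G Gi]])
    show "\<forall>x\<in>carrier_vec k. x \<noteq> 0\<^sub>v k \<longrightarrow> x \<bullet> (?P *\<^sub>v x) > 0"
      using Psi_quadratic_form_pos[OF Vp_carrier _ _ _ kern M] orth_cols_Vp_eq_0 by blast
    show "real n \<noteq> 0" using js_last by simp
  qed
  moreover have "R * ?G * ?P * transpose_mat (R * ?G) = R * ?G * ?P * ?G * transpose_mat R"
    unfolding RGT using R G P by (simp add: assoc_mult_mat[of _ q k _ k _ q])
  ultimately show ?thesis
    unfolding Nstar_def using Omega_hat_sparse_scores[OF X rk y ss R bw] by simp
qed

lemma weights_ok_pos_entry:
  fixes \<omega> :: "real vec"
  assumes "weights_ok k \<omega>"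
  shows "\<exists>i<k. 0 < \<omega> $ i"
proof -
  have wc: "\<omega> \<in> carrier_vec k" and nz: "\<omega> \<noteq> 0\<^sub>v k" and nn: "\<forall>i<k. 0 \<le> \<omega> $ i"
    using assms unfolding weights_ok_def by auto
  obtain i where "i < k" "\<omega> $ i \<noteq> 0"
    using nz wc by (metis eq_vecI carrier_vecD index_zero_vec)
  thus ?thesis using nn by force
qed

context sparse_scores
begin

lemma rho_den_sig2_Vp_pos:
  assumes i: "i < k" and row: "\<exists>j<dim_col Vp - 1. Vp $$ (i, j) \<noteq> 0"
  shows "0 < rho_den Vp i" and "0 < sig2 Vp i"
proof -
  obtain j0 where j0: "j0 < dim_col Vp - 1" "Vp $$ (i, j0) \<noteq> 0" using row by blast
  hence j0': "j0 \<in> {1..<dim_col Vp}" using Vp_first_col_eq_0[OF i] by (cases j0) auto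
  show "0 < rho_den Vp i" unfolding rho_den_def using j0 by (intro sum_pos2[of _ j0]) auto
  have "0 < (\<Sum>j\<in>{1..<dim_col Vp}. (Vp $$ (i, j) - rho Vp i * Vp $$ (i, j - 1))\<^sup>2)"
    using j0 j0' rho_Vp_eq_0[OF i] by (intro sum_pos2[of _ j0]) auto
  moreover have "1 < real (dim_col Vp)" using j0 j0' by simp
  ultimately show "0 < sig2 Vp i" unfolding sig2_def by simp
qed

lemma bw_val_AM_Vp_defined:
  assumes b: "b = BW_AM \<omega> c1 c2 jsel" and ok: "bw_ok k b"
    and rows: "\<forall>i<k. \<exists>j<dim_col Vp - 1. Vp $$ (i, j) \<noteq> 0"
  shows "bw_val b n' Vp \<noteq> None"
proof -
  have w: "weights_ok k \<omega>" using ok b by auto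
  hence nn: "\<forall>i<k. 0 \<le> \<omega> $ i" unfolding weights_ok_def by auto
  obtain i0 where i0: "i0 < k" "0 < \<omega> $ i0" using weights_ok_pos_entry[OF w] by blast
  have "0 < (\<Sum>i<k. \<omega> $ i * (sig2 Vp i)\<^sup>2 / (1 - rho Vp i) ^ 4)"
    using i0 nn rho_den_sig2_Vp_pos(2)[of i0] rows rho_Vp_eq_0 by (intro sum_pos2[of _ i0]) auto
  moreover have "rho_den Vp i \<noteq> 0" if "i < k" for i using rho_den_sig2_Vp_pos(1) rows that by fastforce
  ultimately show ?thesis unfolding b using Vp_carrier rho_Vp_eq_0 by (auto simp: Let_def)
qed

lemma bw_val_NW_Vp_defined:
  assumes b: "b = BW_NW w \<omega> c1 c2 c3" and ok: "bw_ok k b"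
    and sgn: "(\<forall>j<dim_col Vp. 0 \<le> \<omega> \<bullet> col Vp j) \<or> (\<forall>j<dim_col Vp. \<omega> \<bullet> col Vp j \<le> 0)"
  shows "bw_val b n' Vp \<noteq> None"
proof -
  have wok: "weights_ok k \<omega>" and wn: "\<forall>i. 0 \<le> w i" and w0: "w 0 = 1" using ok b by auto
  have wc: "\<omega> \<in> carrier_vec k" and wnz: "\<omega> \<noteq> 0\<^sub>v k" using wok unfolding weights_ok_def by auto
  let ?m = "n - p"
  let ?z = "\<lambda>j. col Vp j \<bullet> \<omega>"
  have z_comm: "?z j = \<omega> \<bullet> col Vp j" if "j < ?m" for j
    using comm_scalar_prod[OF _ wc] Vp_carrier that by auto
  have prod_nn: "0 \<le> ?z j * ?z j'" if "j < ?m" "j' < ?m" for j j'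
    using sgn that z_comm Vp_carrier by (auto intro: mult_nonneg_nonneg mult_nonpos_nonpos)
  obtain j0 where j0: "j0 < ?m" "?z j0 \<noteq> 0" using orth_cols_Vp_eq_0 wc wnz by blast
  let ?sb = "\<lambda>i. \<omega> \<bullet> (Gam Vp \<bar>i\<bar> *\<^sub>v \<omega>)"
  have sb: "?sb i = (1 / real ?m) *
      (\<Sum>j<?m. \<Sum>j'<?m. if int j - int j' = \<bar>i\<bar> then ?z j * ?z j' else 0)" for i
    by (rule Gam_quadratic_form[OF Vp_carrier wc])
  have "0 \<le> w i * ?sb i" for i
    unfolding sb using wn prod_nn by (intro mult_nonneg_nonneg sum_nonneg) auto
  moreover have "0 < w 0 * ?sb 0"
  proof -
    have "(\<Sum>j<?m. \<Sum>j'<?m. if int j - int j' = 0 then ?z j * ?z j' else 0) = (\<Sum>j<?m. (?z j)\<^sup>2)"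
      by (simp add: power2_eq_square sum.delta)
    also have "\<dots> > 0" using j0 by (intro sum_pos2[of _ j0]) auto
    finally show ?thesis unfolding sb w0 using j0 by simp
  qed
  ultimately have "0 < (\<Sum>i\<in>{- (int ?m - 1) .. int ?m - 1}. w i * ?sb i)"
    using j0 by (intro sum_pos2[of _ 0]) auto
  thus ?thesis unfolding b using Vp_carrier by (auto simp: Let_def)
qed

end

lemma col_mult_invertible_eq_0_iff:
  fixes B V :: "real mat"
  assumes B: "B \<in> carrier_mat k k" and Bi: "invertible_mat B" and V: "V \<in> carrier_mat k n" and j: "j < n"
  shows "col (B * V) j = 0\<^sub>v k \<longleftrightarrow> col V j = 0\<^sub>v k"
  using invertible_mat_inj[OF B Bi, of "col V j"] col_mult2[OF B V j] B V by auto

lemma (in sparse_scores) sparse_scores_mult_invertible: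
  assumes B: "B \<in> carrier_mat k k" and Bi: "invertible_mat B"
  shows "sparse_scores n k p t js (B * V)"
proof -
  have BT: "transpose_mat B \<in> carrier_mat k k" "invertible_mat (transpose_mat B)"
    using B invertible_mat_transpose[OF B Bi] by auto
  have dual: "col (B * V) (js i) \<bullet> x = col V (js i) \<bullet> (transpose_mat B *\<^sub>v x)"
    if "i \<le> t" "x \<in> carrier_vec k" for i x
  proof -
    have c: "col V (js i) \<in> carrier_vec k" using V by auto
    have "col (B * V) (js i) \<bullet> x = x \<bullet> (B *\<^sub>v col V (js i))"
      using col_mult2[OF B V js_less[OF that(1)]] comm_scalar_prod[OF _ that(2)] B c by simp
    also have "\<dots> = col V (js i) \<bullet> (transpose_mat B *\<^sub>v x)"
      using transpose_vec_mult_scalar[OF B c that(2)] comm_scalar_prod[OF c] BT(1) that(2) by simp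
    finally show ?thesis .
  qed
  have orth: "x = 0\<^sub>v k" if x: "x \<in> carrier_vec k" and I: "\<forall>i\<in>I. i \<le> t"
    and o: "\<forall>i\<in>I. col (B * V) (js i) \<bullet> x = 0"
    and base: "\<forall>y\<in>carrier_vec k. (\<forall>i\<in>I. col V (js i) \<bullet> y = 0) \<longrightarrow> y = 0\<^sub>v k" for x I
  proof -
    have "\<forall>i\<in>I. col V (js i) \<bullet> (transpose_mat B *\<^sub>v x) = 0" using dual[OF _ x] I o by simp
    moreover have "transpose_mat B *\<^sub>v x \<in> carrier_vec k" using BT(1) x by simp
    ultimately have "transpose_mat B *\<^sub>v x = 0\<^sub>v k" using base by blast
    thus ?thesis using invertible_mat_inj[OF BT x] by simp
  qed
  show ?thesis
  proof (unfold_locales)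
    show "{j. j < n \<and> col (B * V) j \<noteq> 0\<^sub>v k} = js ` {..t}"
      using col_mult_invertible_eq_0_iff[OF B Bi V] support by blast
    show "\<forall>x\<in>carrier_vec k. (\<forall>i<t. col (B * V) (js i) \<bullet> x = 0) \<longrightarrow> x = 0\<^sub>v k"
      using orth[of _ "{..<t}"] orth_init by simp
    show "\<forall>x\<in>carrier_vec k. (\<forall>i\<in>{1..t}. col (B * V) (js i) \<bullet> x = 0) \<longrightarrow> x = 0\<^sub>v k"
      using orth[of _ "{1..t}"] orth_tail by simp
  qed (use B V mono js0 js_last gaps tail p_pos t_pos in simp_all)
qed

lemma condA_mult_invertible:
  fixes X Q :: "real mat"
  assumes X: "X \<in> carrier_mat n k" and rk: "mrank n X = k" and y: "y \<in> carrier_vec n"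
    and Q: "Q \<in> carrier_mat k k" and Qi: "invertible_mat Q" and c: "condA p X y t js"
  shows "condA p (X * Q) y t js"
proof -
  let ?V = "Vhat X y"
  let ?B = "transpose_mat Q"
  have V: "?V \<in> carrier_mat k n" by (rule Vhat_carrier[OF X y])
  have B: "?B \<in> carrier_mat k k" using Q by simp
  have Bi: "invertible_mat ?B" by (rule invertible_mat_transpose[OF Q Qi])
  have dims: "dim_vec y = n" "dim_col X = k" "dim_col (X * Q) = k" using X y Q by auto
  note cA = c[unfolded condA_def Let_def dims]
  have mono: "strict_mono_on {..t} js" and js_last: "js t < n"
    and A3: "if t = k then mrank k ?V = k
       else vspan k ((\<lambda>i. col ?V (js i)) ` {..<t}) = carrier_vec k \<and>
            vspan k ((\<lambda>i. col ?V (js i)) ` {1..t}) = carrier_vec k"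
    using cA by auto
  have support: "{j. j < n \<and> col (?B * ?V) j \<noteq> 0\<^sub>v k} = {j. j < n \<and> col ?V j \<noteq> 0\<^sub>v k}"
    using col_mult_invertible_eq_0_iff[OF B Bi V] by blast
  have span: "vspan k ((\<lambda>i. col (?B * ?V) (js i)) ` I) = carrier_vec k"
    if I: "I \<subseteq> {..t}" and sp: "vspan k ((\<lambda>i. col ?V (js i)) ` I) = carrier_vec k" for I
    using span_cols_at_mult_invertible[OF B Bi V finite_subset[OF I] _ sp] I
      strict_mono_on_atMost_less[OF mono _ js_last] by auto
  have A3': "if t = k then mrank k (?B * ?V) = k
       else vspan k ((\<lambda>i. col (?B * ?V) (js i)) ` {..<t}) = carrier_vec k \<and>
            vspan k ((\<lambda>i. col (?B * ?V) (js i)) ` {1..t}) = carrier_vec k"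
  proof (cases "t = k")
    case True
    thus ?thesis
      using A3 full_row_rank_iff_span_cols[OF V] full_row_rank_iff_span_cols[OF mult_carrier_mat[OF B V]]
        span_cols_mult_invertible[OF V B Bi] by simp
  next
    case False
    have "{..<t} \<subseteq> {..t}" and "{1..t} \<subseteq> {..t}" by auto
    thus ?thesis using False A3 span by simp
  qed
  show ?thesis
    unfolding condA_def Let_def Vhat_mult_invertible[OF X rk y Q Qi] dims support
    using cA A3' by (simp only: simp_thms) blast
qed

lemma design0_mult_invertible:
  fixes X Q :: "real mat"
  assumes "X \<in> design0 n k" and "Q \<in> carrier_mat k k" and "invertible_mat Q"
  shows "X * Q \<in> design0 n k"
  using assms full_col_rank_mult_invertible unfolding design0_def by auto

lemma notin_Nstar_mult_invertible:
  fixes X Q R :: "real mat"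
  assumes X: "X \<in> carrier_mat n k" and rk: "mrank n X = k" and y: "y \<in> carrier_vec n"
    and ss: "sparse_scores n k p t js (Vhat X y)"
    and R: "R \<in> carrier_mat q k" and rkR: "mrank q R = q" and kern: "kernel_ok \<kappa>" and ok: "bw_ok k b"
    and Q: "Q \<in> carrier_mat k k" and Qi: "invertible_mat Q"
    and bw_def: "bw_val b n (Vp_mat p (transpose_mat Q * Vhat X y)) \<noteq> None"
  shows "y \<notin> Nstar \<kappa> b p R (X * Q)"
proof -
  have "sparse_scores n k p t js (Vhat (X * Q) y)"
    unfolding Vhat_mult_invertible[OF X rk y Q Qi]
    by (rule sparse_scores.sparse_scores_mult_invertible[OF ss _ invertible_mat_transpose[OF Q Qi]])
      (use Q in simp)
  thus ?thesis
    using notin_Nstar_if_bw_defined[OF mult_carrier_mat[OF X Q] full_col_rank_mult_invertible[OF X rk Q Qi]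
        y _ R rkR kern ok] bw_def
    unfolding Vhat_mult_invertible[OF X rk y Q Qi] by blast
qed

section \<open>Shearing the design\<close>

definition shear_mat :: "nat \<Rightarrow> real \<Rightarrow> real mat" where
  "shear_mat k c = mat k k (\<lambda>(a, b). if a = b then 1 else if a = 0 then c else 0)"

lemma shear_mat_carrier: "shear_mat k c \<in> carrier_mat k k"
  unfolding shear_mat_def by simp

lemma shear_mat_invertible: "invertible_mat (shear_mat k c)"
proof -
  have ut: "upper_triangular (shear_mat k c)" unfolding upper_triangular_def shear_mat_def by auto
  have "diag_mat (shear_mat k c) = replicate k 1"
    unfolding diag_mat_def shear_mat_def by (intro nth_equalityI) auto
  hence "det (shear_mat k c) = 1" using det_upper_triangular[OF ut shear_mat_carrier] by simp
  thus ?thesis using invertible_mat_if_det[OF shear_mat_carrier] by simp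
qed

lemma col_mult_shear_mat_0:
  fixes X :: "real mat"
  assumes X: "X \<in> carrier_mat n k" and k: "0 < k"
  shows "col (X * shear_mat k c) 0 = col X 0"
proof -
  have "col (shear_mat k c) 0 = unit_vec k 0" unfolding shear_mat_def using k by (intro eq_vecI) auto
  thus ?thesis using col_mult2[OF X shear_mat_carrier k] mult_unit_vec_eq_col[OF X k] by simp
qed

lemma transpose_shear_mat_mult_index:
  fixes V :: "real mat"
  assumes V: "V \<in> carrier_mat k n" and a: "a < k" and j: "j < n"
  shows "(transpose_mat (shear_mat k c) * V) $$ (a, j) = V $$ (a, j) + (if a = 0 then 0 else c * V $$ (0, j))"
proof -
  have "(transpose_mat (shear_mat k c) * V) $$ (a, j) = (\<Sum>l<k. shear_mat k c $$ (l, a) * V $$ (l, j))"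
    using V a j unfolding shear_mat_def by (simp add: scalar_prod_def atLeast0LessThan)
  also have "\<dots> = (\<Sum>l<k. (if l = a then V $$ (a, j) else 0) + (if l = 0 then (if a = 0 then 0 else c * V $$ (0, j)) else 0))"
    using a unfolding shear_mat_def by (intro sum.cong refl) auto
  also have "\<dots> = V $$ (a, j) + (if a = 0 then 0 else c * V $$ (0, j))"
    using a by (simp add: sum.distrib sum.delta)
  finally show ?thesis .
qed

lemma scalar_prod_col_Vp_shear:
  fixes V :: "real mat" and \<omega> :: "real vec"
  assumes V: "V \<in> carrier_mat k n" and wc: "\<omega> \<in> carrier_vec k" and j: "j < n - p"
  shows "\<omega> \<bullet> col (Vp_mat p (transpose_mat (shear_mat k c) * V)) j
    = (\<Sum>a<k. \<omega> $ a * V $$ (a, j + p)) + c * V $$ (0, j + p) * (\<Sum>a<k. if a = 0 then 0 else \<omega> $ a)"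
proof -
  let ?W = "transpose_mat (shear_mat k c) * V"
  have W: "?W \<in> carrier_mat k n" by (rule mult_carrier_mat[OF _ V]) (simp add: shear_mat_carrier)
  have "Vp_mat p ?W \<in> carrier_mat k (n - p)" by (rule Vp_mat_carrier[OF W])
  hence "\<omega> \<bullet> col (Vp_mat p ?W) j = (\<Sum>a<k. \<omega> $ a * Vp_mat p ?W $$ (a, j))"
    using wc j by (simp add: scalar_prod_def atLeast0LessThan)
  also have "\<dots> = (\<Sum>a<k. \<omega> $ a * V $$ (a, j + p) + c * V $$ (0, j + p) * (if a = 0 then 0 else \<omega> $ a))"
  proof (rule sum.cong[OF refl])
    fix a assume "a \<in> {..<k}"
    hence a: "a < k" by simp
    have "Vp_mat p ?W $$ (a, j) = V $$ (a, j + p) + (if a = 0 then 0 else c * V $$ (0, j + p))"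
      using Vp_mat_index[OF W a j] transpose_shear_mat_mult_index[OF V a, of "j + p"] j by simp
    thus "\<omega> $ a * Vp_mat p ?W $$ (a, j)
        = \<omega> $ a * V $$ (a, j + p) + c * V $$ (0, j + p) * (if a = 0 then 0 else \<omega> $ a)"
      by (simp add: algebra_simps)
  qed
  also have "\<dots> = (\<Sum>a<k. \<omega> $ a * V $$ (a, j + p)) + c * V $$ (0, j + p) * (\<Sum>a<k. if a = 0 then 0 else \<omega> $ a)"
    by (simp add: sum.distrib sum_distrib_left)
  finally show ?thesis .
qed

lemma weighted_sum_if_tail_weights_zero:
  fixes \<omega> :: "real vec" and u :: "nat \<Rightarrow> real"
  assumes nn: "\<forall>a<k. 0 \<le> \<omega> $ a" and s0: "(\<Sum>a<k. if a = 0 then 0 else \<omega> $ a) = 0" and k: "0 < k"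
  shows "(\<Sum>a<k. \<omega> $ a * u a) = \<omega> $ 0 * u 0"
proof -
  have zero: "\<forall>a\<in>{..<k}. (if a = 0 then 0 else \<omega> $ a) = 0"
    using s0 nn by (subst sum_nonneg_eq_0_iff[symmetric]) auto
  have "\<omega> $ a = 0" if "a < k" "a \<noteq> 0" for a
  proof -
    have "(if a = 0 then 0 else \<omega> $ a) = 0" using zero that(1) by blast
    thus ?thesis using that(2) by simp
  qed
  hence "(\<Sum>a<k. \<omega> $ a * u a) = (\<Sum>a<k. if a = 0 then \<omega> $ 0 * u 0 else 0)" by (intro sum.cong) auto
  also have "\<dots> = \<omega> $ 0 * u 0" using k by simp
  finally show ?thesis .
qed

lemma abs_le_sum_ratio_mult:
  fixes w d :: "nat \<Rightarrow> real"
  assumes I: "finite I" "i \<in> I" and d: "\<forall>i\<in>I. 0 < d i"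
  shows "\<bar>w i\<bar> \<le> (\<Sum>i\<in>I. \<bar>w i\<bar> / d i) * d i"
proof -
  have "\<bar>w i\<bar> / d i \<le> (\<Sum>i\<in>I. \<bar>w i\<bar> / d i)" using I d by (intro member_le_sum) auto
  thus ?thesis using d I by (simp add: divide_le_eq)
qed

lemma add_shift_ne_0:
  fixes u v S :: real
  assumes v: "v \<noteq> 0" and u: "\<bar>u\<bar> \<le> S"
  shows "u + (S / \<bar>v\<bar> + 1) * v \<noteq> 0"
proof -
  have "0 \<le> S" using u abs_ge_zero order_trans by blast
  hence "0 \<le> S / \<bar>v\<bar> + 1" by simp
  hence "\<bar>(S / \<bar>v\<bar> + 1) * v\<bar> = (S / \<bar>v\<bar> + 1) * \<bar>v\<bar>" by (simp add: abs_mult)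
  also have "\<dots> = S + \<bar>v\<bar>" using v by (simp add: distrib_right)
  finally have "\<bar>(S / \<bar>v\<bar> + 1) * v\<bar> = S + \<bar>v\<bar>" .
  thus ?thesis using u v by linarith
qed

context sparse_scores
begin

lemma shear_Vp_rows_nonzero:
  assumes t2: "2 \<le> t" and v0: "V $$ (0, js 1) \<noteq> 0"
  defines "W \<equiv> transpose_mat (shear_mat k ((\<Sum>a<k. \<bar>V $$ (a, js 1)\<bar>) / \<bar>V $$ (0, js 1)\<bar> + 1)) * V"
  shows "\<forall>a<k. \<exists>j<dim_col (Vp_mat p W) - 1. Vp_mat p W $$ (a, j) \<noteq> 0"
proof (intro allI impI)
  fix a assume a: "a < k"
  have W: "W \<in> carrier_mat k n" unfolding W_def by (rule mult_carrier_mat[OF _ V]) (simp add: shear_mat_carrier)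
  have "js 1 + p + 1 \<le> js t" using support_spacing[of "js 1" "js t"] mono t2
    by (auto simp: strict_mono_on_def)
  hence j: "js 1 - p < n - p - 1" and jp: "js 1 - p + p = js 1" and j1: "js 1 < n"
    using js_ge[of 1] js_last t2 by auto
  have "Vp_mat p W $$ (a, js 1 - p) = W $$ (a, js 1)" using Vp_mat_index[OF W a] j jp by simp
  also have "\<dots> \<noteq> 0"
  proof (cases "a = 0")
    case False
    have "\<bar>V $$ (a, js 1)\<bar> \<le> (\<Sum>a<k. \<bar>V $$ (a, js 1)\<bar>)" using a by (intro member_le_sum) auto
    thus ?thesis
      unfolding W_def transpose_shear_mat_mult_index[OF V a j1] using False add_shift_ne_0[OF v0] by simp
  qed (use v0 a j1 V in \<open>simp add: W_def transpose_shear_mat_mult_index\<close>)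
  finally show "\<exists>j<dim_col (Vp_mat p W) - 1. Vp_mat p W $$ (a, j) \<noteq> 0"
    using j W by (intro exI[of _ "js 1 - p"]) (simp add: Vp_mat_def)
qed

text \<open>With \<open>s\<close> the total weight of the rows other than the first, \<open>c\<close> is chosen so that
  \<open>c s |V\<^sub>0\<^sub>j|\<close> dominates \<open>|\<omega>' V\<^sub>j|\<close> at every support column \<open>j\<close>; if \<open>s = 0\<close> the quotients
  are junk (division by zero), but then \<open>\<omega>' V\<^sub>j = \<omega>\<^sub>0 V\<^sub>0\<^sub>j\<close> already has the sign of \<open>V\<^sub>0\<^sub>j\<close>.\<close>

lemma shear_Vp_same_sign:
  fixes \<omega> :: "real vec"
  assumes w: "weights_ok k \<omega>" and sig: "\<sigma> = 1 \<or> \<sigma> = -1"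
    and pos: "\<forall>i\<in>{1..t}. 0 < \<sigma> * V $$ (0, js i)"
  shows "\<exists>c. \<forall>j<n - p. 0 \<le> \<sigma> * (\<omega> \<bullet> col (Vp_mat p (transpose_mat (shear_mat k c) * V)) j)"
proof -
  have wc: "\<omega> \<in> carrier_vec k" and wnn: "\<forall>a<k. 0 \<le> \<omega> $ a" using w unfolding weights_ok_def by auto
  let ?s = "\<Sum>a<k. if a = 0 then 0 else \<omega> $ a"
  let ?W = "\<lambda>c'. \<Sum>a<k. \<omega> $ a * V $$ (a, c')"
  let ?c = "\<Sum>i\<in>{1..t}. \<bar>?W (js i)\<bar> / (?s * \<bar>V $$ (0, js i)\<bar>)"
  have s_nn: "0 \<le> ?s" using wnn by (intro sum_nonneg) auto
  have abs_v: "\<sigma> * V $$ (0, js i) = \<bar>V $$ (0, js i)\<bar>" "V $$ (0, js i) \<noteq> 0" if "i \<in> {1..t}" for i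
    using pos sig that by fastforce+
  have "0 \<le> \<sigma> * (?W (j + p) + ?c * V $$ (0, j + p) * ?s)" if j: "j < n - p" for j
  proof (cases "j + p \<in> js ` {..t}")
    case False
    hence "\<forall>a<k. V $$ (a, j + p) = 0" using entry_eq_0_off_support j by auto
    thus ?thesis using k_pos by simp
  next
    case True
    then obtain i where i: "i \<le> t" "j + p = js i" by auto
    hence it: "i \<in> {1..t}" using js0 p_pos by (cases "i = 0") auto
    let ?v = "V $$ (0, js i)"
    have "0 \<le> \<sigma> * ?W (js i) + ?c * ?s * \<bar>?v\<bar>"
    proof (cases "?s = 0")
      case True
      hence "\<sigma> * ?W (js i) = \<omega> $ 0 * (\<sigma> * ?v)"
        using weighted_sum_if_tail_weights_zero[OF wnn _ k_pos] by simp
      thus ?thesis using True abs_v[OF it] wnn k_pos by simp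
    next
      case False
      hence "\<bar>?W (js i)\<bar> \<le> ?c * (?s * \<bar>?v\<bar>)"
        using abs_le_sum_ratio_mult[OF _ it, of "\<lambda>i. ?s * \<bar>V $$ (0, js i)\<bar>"] s_nn abs_v(2) by simp
      moreover have "- \<bar>?W (js i)\<bar> \<le> \<sigma> * ?W (js i)" using sig by auto
      ultimately show ?thesis by (simp add: algebra_simps)
    qed
    moreover have "\<sigma> * (?W (j + p) + ?c * V $$ (0, j + p) * ?s) = \<sigma> * ?W (js i) + ?c * ?s * (\<sigma> * ?v)"
      using i by (simp add: algebra_simps)
    ultimately show ?thesis using abs_v[OF it] by simp
  qed
  thus ?thesis using scalar_prod_col_Vp_shear[OF V wc] by auto
qed

lemma exists_shear_bw_defined:
  assumes ok: "bw_ok k b" and t2: "2 \<le> t"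
    and sgn: "(\<forall>i\<in>{1..t}. 0 < V $$ (0, js i)) \<or> (\<forall>i\<in>{1..t}. V $$ (0, js i) < 0)"
  shows "\<exists>c. bw_val b n' (Vp_mat p (transpose_mat (shear_mat k c) * V)) \<noteq> None"
proof -
  let ?W = "\<lambda>c. transpose_mat (shear_mat k c) * V"
  have ss: "sparse_scores n k p t js (?W c)" for c
    using sparse_scores_mult_invertible[of "transpose_mat (shear_mat k c)"]
      invertible_mat_transpose[OF shear_mat_carrier shear_mat_invertible] shear_mat_carrier[of k c] by simp
  obtain \<sigma> :: real where sig: "\<sigma> = 1 \<or> \<sigma> = -1" and pos: "\<forall>i\<in>{1..t}. 0 < \<sigma> * V $$ (0, js i)"
    using sgn by (metis mult_1 mult_minus1 neg_0_less_iff_less)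
  show ?thesis
  proof (cases b)
    case BW_KV
    thus ?thesis by simp
  next
    case (BW_AM \<omega> c1 c2 jsel)
    have "1 \<in> {1..t}" using t2 by simp
    hence "V $$ (0, js 1) \<noteq> 0" using pos by fastforce
    with shear_Vp_rows_nonzero[OF t2] obtain c
      where "\<forall>a<k. \<exists>j<dim_col (Vp_mat p (?W c)) - 1. Vp_mat p (?W c) $$ (a, j) \<noteq> 0" by blast
    thus ?thesis using sparse_scores.bw_val_AM_Vp_defined[OF ss BW_AM ok] by blast
  next
    case (BW_NW w \<omega> c1 c2 c3)
    hence "weights_ok k \<omega>" using ok by simp
    from shear_Vp_same_sign[OF this sig pos] obtain c
      where "\<forall>j<n - p. 0 \<le> \<sigma> * (\<omega> \<bullet> col (Vp_mat p (?W c)) j)" by blast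
    hence "(\<forall>j<dim_col (Vp_mat p (?W c)). 0 \<le> \<omega> \<bullet> col (Vp_mat p (?W c)) j) \<or>
        (\<forall>j<dim_col (Vp_mat p (?W c)). \<omega> \<bullet> col (Vp_mat p (?W c)) j \<le> 0)"
      using sig V by (auto simp: Vp_mat_def shear_mat_def)
    thus ?thesis using sparse_scores.bw_val_NW_Vp_defined[OF ss BW_NW ok] by blast
  qed
qed

end

lemma exists_shear_notin_Nstar:
  fixes X R :: "real mat"
  assumes X: "X \<in> carrier_mat n k" and rk: "mrank n X = k" and y: "y \<in> carrier_vec n"
    and ss: "sparse_scores n k p t js (Vhat X y)" and tk: "k \<le> t" and k2: "2 \<le> k"
    and R: "R \<in> carrier_mat q k" and rkR: "mrank q R = q" and kern: "kernel_ok \<kappa>" and ok: "bw_ok k b"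
    and sgn: "(\<forall>i\<in>{1..t}. 0 < Vhat X y $$ (0, js i)) \<or> (\<forall>i\<in>{1..t}. Vhat X y $$ (0, js i) < 0)"
  shows "\<exists>Q\<in>carrier_mat k k. invertible_mat Q \<and> col (X * Q) 0 = col X 0 \<and> y \<notin> Nstar \<kappa> b p R (X * Q)"
proof -
  interpret sparse_scores n k p t js "Vhat X y" by (rule ss)
  have "2 \<le> t" using tk k2 by simp
  from exists_shear_bw_defined[OF ok this sgn, of n] obtain c
    where bw: "bw_val b n (Vp_mat p (transpose_mat (shear_mat k c) * Vhat X y)) \<noteq> None" by blast
  show ?thesis
  proof (intro bexI[of _ "shear_mat k c"] conjI)
    show "y \<notin> Nstar \<kappa> b p R (X * shear_mat k c)"
      by (rule notin_Nstar_mult_invertible[OF X rk y ss R rkR kern ok shear_mat_carrier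
            shear_mat_invertible bw])
    show "col (X * shear_mat k c) 0 = col X 0" using col_mult_shear_mat_0[OF X] k2 by simp
  qed (rule shear_mat_invertible shear_mat_carrier)+
qed

theorem lemmaA1:
  fixes \<kappa> :: "real \<Rightarrow> real" and b :: bandwidth and n k p q t :: nat
    and R X :: "real mat" and r y :: "real vec" and js :: "nat \<Rightarrow> nat"
  assumes n_gt: "2 < n" and k_ge: "1 \<le> k" and k_lt: "k < n"
    and R_dim: "R \<in> carrier_mat q k" and q_ge: "1 \<le> q" and R_rank: "mrank q R = q"
    and r_dim: "r \<in> carrier_vec q"
    and A: "assumptionA n k \<kappa> b p"
    and X: "X \<in> design0 n k" and y: "y \<in> carrier_vec n"
    and t_ge: "k \<le> t"
    and A123: "condA p X y t js"
  shows
    \<comment> \<open>1.\<close>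
    "Ahat p X y = Some (0\<^sub>m k (k * p))
     \<comment> \<open>2. (CKV)\<close>
     \<and> ((\<exists>c. b = BW_KV c) \<longrightarrow> y \<notin> Nstar \<kappa> b p R X)
     \<comment> \<open>2. (CAM)\<close>
     \<and> ((\<exists>\<omega> c1 c2 j. b = BW_AM \<omega> c1 c2 j) \<and>
          (\<exists>Z. Zhat p X y = Some Z \<and> (\<forall>i<k. \<exists>j<dim_col Z - 1. Z $$ (i, j) \<noteq> 0))
        \<longrightarrow> y \<notin> Nstar \<kappa> b p R X)
     \<comment> \<open>2. the parenthetical sufficient condition for (CAM)\<close>
     \<and> (int p - 1 < int n - int (js t + 1) \<longrightarrow>
          (\<exists>Z. Zhat p X y = Some Z \<and> (\<forall>i<k. \<exists>j<dim_col Z - 1. Z $$ (i, j) \<noteq> 0)))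
     \<comment> \<open>2. (CNW)\<close>
     \<and> (\<forall>w \<omega> c1 c2 c3. b = BW_NW w \<omega> c1 c2 c3 \<and>
          (\<exists>Z. Zhat p X y = Some Z \<and>
             ((\<forall>j<dim_col Z. 0 \<le> \<omega> \<bullet> col Z j) \<or> (\<forall>j<dim_col Z. \<omega> \<bullet> col Z j \<le> 0)))
        \<longrightarrow> y \<notin> Nstar \<kappa> b p R X)
     \<comment> \<open>3.\<close>
     \<and> (\<forall>Q \<in> carrier_mat k k. mrank k Q = k \<longrightarrow>
          X * Q \<in> design0 n k \<and> condA p (X * Q) y t js)
     \<comment> \<open>4.\<close>
     \<and> (2 \<le> k \<and> ((\<forall>i\<in>{1..t}. 0 < Vhat X y $$ (0, js i)) \<or> (\<forall>i\<in>{1..t}. Vhat X y $$ (0, js i) < 0))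
        \<longrightarrow> (\<exists>Q \<in> carrier_mat k k. invertible_mat Q \<and> col (X * Q) 0 = col X 0 \<and>
               y \<notin> Nstar \<kappa> b p R (X * Q)))"
proof -
  have kern: "kernel_ok \<kappa>" and ok: "bw_ok k b" and p_pos: "1 \<le> p"
    using A unfolding assumptionA_def by auto
  have Xc: "X \<in> carrier_mat n k" and rk: "mrank n X = k" using X unfolding design0_def by auto
  have ss: "sparse_scores n k p t js (Vhat X y)"
    by (rule sparse_scores_if_condA[OF Xc rk y A123 t_ge k_ge p_pos])
  interpret sparse_scores n k p t js "Vhat X y" by (rule ss)
  note Zhat = Ahat_Zhat_sparse_scores(2)[OF ss]
  note notin_Nstar = notin_Nstar_if_bw_defined[OF Xc rk y ss R_dim R_rank kern ok]
  have "js t + p < n" if "int p - 1 < int n - int (js t + 1)" using that by linarith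
  hence tail: "int p - 1 < int n - int (js t + 1) \<longrightarrow>
      (\<exists>Z. Zhat p X y = Some Z \<and> (\<forall>i<k. \<exists>j<dim_col Z - 1. Z $$ (i, j) \<noteq> 0))"
    using Vp_rows_nonzero Zhat by blast
  have reparam: "\<forall>Q \<in> carrier_mat k k. mrank k Q = k \<longrightarrow> X * Q \<in> design0 n k \<and> condA p (X * Q) y t js"
    using design0_mult_invertible[OF X] condA_mult_invertible[OF Xc rk y _ _ A123]
      invertible_mat_if_full_rank by blast
  show ?thesis
    using Ahat_Zhat_sparse_scores(1)[OF ss] tail reparam
      notin_Nstar bw_val_AM_Vp_defined[OF _ ok] bw_val_NW_Vp_defined[OF _ ok] Zhat
      exists_shear_notin_Nstar[OF Xc rk y ss t_ge _ R_dim R_rank kern ok]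
    by auto
qed

end
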